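(* Let $\mathcal C$ be a small cylinder category. Weak equivalences in $\widetilde{\mathcal C}$ satisfy 2-out-of-3: for composable $f:X\to Y$, $g:Y\to Z$ in $\widetilde{\mathcal C}$, if two of $f$, $g$, $g\circ f$ are weak equivalences then so is the third.
   Context: A cylinder category is a category $\mathcal C$ with two classes of morphisms, the cofibrations and the weak equivalences (morphisms in both classes are called trivial cofibrations), such that: (1) both classes contain all isomorphisms and are closed under composition; (2) weak equivalences satisfy 2-out-of-6: if $f,g,h$ are composable and $f\circ g$, $g\circ h$ are weak equivalences then $f,g,h,f\circ g\circ h$ are; (3) $\mathcal C$ has an initial object $0$ and every $0\to X$ is a cofibration; (4) pushouts of cofibrations along arbitrary maps exist and are cofibrations; (5) pushouts of trivial cofibrations are trivial cofibrations; (6) for every object $X$ the codiagonal $X\sqcup X\to X$ factors as a cofibration $X\sqcup X\hookrightarrow IX$ followed by a weak equivalence $IX\to X$; (7) every trivial cofibration admits a retraction. For a cofibration $A\hookrightarrow B$, a relative cylinder object is a factorization $B\sqcup_A B\hookrightarrow I_AB\xrightarrow{\sim}B$ of the codiagonal into a cofibration followed by a weak equivalence. For a small cylinder category $\mathcal C$, $\widetilde{\mathcal C}$ is the category of presheaves of sets on $\mathcal C$ sending the initial object to a singleton and pushouts along cofibrations to pullbacks of sets; $\mathcal C$ is identified with its image under the Yoneda embedding. A morphism $f:X\to Y$ of $\widetilde{\mathcal C}$ is a weak equivalence if for every cofibration $i:A\hookrightarrow B$ of $\mathcal C$ and every commutative square with top $u:A\to X$ and bottom $w:B\to Y$ (so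 $f\circ u=w\circ i$), there exist $a:B\to X$ with $a\circ i=u$ and $h:I_AB\to Y$ for some relative cylinder object such that $h$ restricted along the two inclusions $B\to I_AB$ is $f\circ a$ and $w$. *)

theory Defs
  imports Main
begin

record ('o, 'm) category =
  Obj :: "'o set"
  Mor :: "'m set"
  Dom :: "'m \<Rightarrow> 'o"
  Cod :: "'m \<Rightarrow> 'o"
  Id  :: "'o \<Rightarrow> 'm"
  Comp :: "'m \<Rightarrow> 'm \<Rightarrow> 'm"   (* Comp g f = g \<circ> f *)

definition hom :: "('o, 'm, 'x) category_scheme \<Rightarrow> 'o \<Rightarrow> 'o \<Rightarrow> 'm set" where
  "hom C a b = {f \<in> Mor C. Dom C f = a \<and> Cod C f = b}"

definition is_category :: "('o, 'm, 'x) category_scheme \<Rightarrow> bool" where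
  "is_category C \<longleftrightarrow>
     (\<forall>f\<in>Mor C. Dom C f \<in> Obj C \<and> Cod C f \<in> Obj C) \<and>
     (\<forall>a\<in>Obj C. Id C a \<in> hom C a a) \<and>
     (\<forall>f\<in>Mor C. \<forall>g\<in>Mor C. Cod C f = Dom C g \<longrightarrow> Comp C g f \<in> hom C (Dom C f) (Cod C g)) \<and>
     (\<forall>f\<in>Mor C. Comp C f (Id C (Dom C f)) = f \<and> Comp C (Id C (Cod C f)) f = f) \<and>
     (\<forall>f\<in>Mor C. \<forall>g\<in>Mor C. \<forall>h\<in>Mor C. Cod C f = Dom C g \<longrightarrow> Cod C g = Dom C h \<longrightarrow>
        Comp C h (Comp C g f) = Comp C (Comp C h g) f)"

definition iso :: "('o, 'm, 'x) category_scheme \<Rightarrow> 'm \<Rightarrow> bool" where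
  "iso C f \<longleftrightarrow> f \<in> Mor C \<and> (\<exists>g\<in>hom C (Cod C f) (Dom C f).
      Comp C g f = Id C (Dom C f) \<and> Comp C f g = Id C (Cod C f))"

definition initial :: "('o, 'm, 'x) category_scheme \<Rightarrow> 'o \<Rightarrow> bool" where
  "initial C z \<longleftrightarrow> z \<in> Obj C \<and> (\<forall>a\<in>Obj C. \<exists>!f. f \<in> hom C z a)"

text \<open>Pushout square: for f : a -> b and g : a -> c, the maps p : b -> d and q : c -> d
  form a pushout (so q is the pushout of f along g, p the pushout of g along f).\<close>
definition is_pushout :: "('o, 'm, 'x) category_scheme \<Rightarrow> 'm \<Rightarrow> 'm \<Rightarrow> 'm \<Rightarrow> 'm \<Rightarrow> bool" where
  "is_pushout C f g p q \<longleftrightarrow>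
     f \<in> Mor C \<and> g \<in> Mor C \<and> Dom C f = Dom C g \<and>
     p \<in> hom C (Cod C f) (Cod C p) \<and> q \<in> hom C (Cod C g) (Cod C p) \<and>
     Comp C p f = Comp C q g \<and>
     (\<forall>e\<in>Obj C. \<forall>u\<in>hom C (Cod C f) e. \<forall>v\<in>hom C (Cod C g) e.
        Comp C u f = Comp C v g \<longrightarrow>
        (\<exists>!k. k \<in> hom C (Cod C p) e \<and> Comp C k p = u \<and> Comp C k q = v))"

text \<open>Relative cylinder object for a cofibration i : A -> B: a pushout B +_A B (with
  coprojections p, q), a cofibration j : B +_A B -> I and a weak equivalence r : I -> B
  whose composite r o j is the codiagonal (r o j o p = id, r o j o q = id).\<close>

record ('o, 'm) cyl_category = "('o, 'm) category" +
  Cof :: "'m set"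
  WE  :: "'m set"

definition rel_cylinder :: "('o, 'm, 'x) cyl_category_scheme \<Rightarrow> 'm \<Rightarrow> 'm \<Rightarrow> 'm \<Rightarrow> 'm \<Rightarrow> 'm \<Rightarrow> bool" where
  "rel_cylinder C i p q j r \<longleftrightarrow>
     is_pushout C i i p q \<and> j \<in> Cof C \<and> r \<in> WE C \<and>
     j \<in> hom C (Cod C p) (Cod C j) \<and> r \<in> hom C (Cod C j) (Cod C i) \<and>
     Comp C r (Comp C j p) = Id C (Cod C i) \<and> Comp C r (Comp C j q) = Id C (Cod C i)"

definition cylinder_category :: "('o, 'm, 'x) cyl_category_scheme \<Rightarrow> bool" where
  "cylinder_category C \<longleftrightarrow>
     is_category C \<and> Cof C \<subseteq> Mor C \<and> WE C \<subseteq> Mor C \<and>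
     \<comment> \<open>(1)\<close>
     (\<forall>f. iso C f \<longrightarrow> f \<in> Cof C \<and> f \<in> WE C) \<and>
     (\<forall>f\<in>Cof C. \<forall>g\<in>Cof C. Cod C f = Dom C g \<longrightarrow> Comp C g f \<in> Cof C) \<and>
     (\<forall>f\<in>WE C. \<forall>g\<in>WE C. Cod C f = Dom C g \<longrightarrow> Comp C g f \<in> WE C) \<and>
     \<comment> \<open>(2) 2-out-of-6, for composable h, g, f (f o g o h)\<close>
     (\<forall>f\<in>Mor C. \<forall>g\<in>Mor C. \<forall>h\<in>Mor C. Cod C h = Dom C g \<longrightarrow> Cod C g = Dom C f \<longrightarrow>
        Comp C f g \<in> WE C \<longrightarrow> Comp C g h \<in> WE C \<longrightarrow>
        f \<in> WE C \<and> g \<in> WE C \<and> h \<in> WE C \<and> Comp C f (Comp C g h) \<in> WE C) \<and>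
     \<comment> \<open>(3)\<close>
     (\<exists>z. initial C z) \<and>
     (\<forall>z. initial C z \<longrightarrow> (\<forall>x\<in>Obj C. hom C z x \<subseteq> Cof C)) \<and>
     \<comment> \<open>(4)\<close>
     (\<forall>f\<in>Cof C. \<forall>g\<in>Mor C. Dom C g = Dom C f \<longrightarrow>
        (\<exists>p q. is_pushout C f g p q) \<and> (\<forall>p q. is_pushout C f g p q \<longrightarrow> q \<in> Cof C)) \<and>
     \<comment> \<open>(5)\<close>
     (\<forall>f\<in>Cof C \<inter> WE C. \<forall>g p q. is_pushout C f g p q \<longrightarrow> q \<in> Cof C \<inter> WE C) \<and>
     \<comment> \<open>(6) the codiagonal of every coproduct X + X factors as cofibration then weak equivalence\<close>
     (\<forall>x\<in>Obj C. \<forall>z e p q. initial C z \<longrightarrow> e \<in> hom C z x \<longrightarrow> is_pushout C e e p q \<longrightarrow>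
        (\<exists>j r. j \<in> Cof C \<and> r \<in> WE C \<and>
           j \<in> hom C (Cod C p) (Cod C j) \<and> r \<in> hom C (Cod C j) x \<and>
           Comp C r (Comp C j p) = Id C x \<and> Comp C r (Comp C j q) = Id C x)) \<and>
     \<comment> \<open>(7)\<close>
     (\<forall>f\<in>Cof C \<inter> WE C. \<exists>r\<in>hom C (Cod C f) (Dom C f). Comp C r f = Id C (Dom C f))"

record ('o, 'm, 'v) presheaf =
  PS :: "'o \<Rightarrow> 'v set"
  PM :: "'m \<Rightarrow> 'v \<Rightarrow> 'v"   (* for f : a -> b, PM f : PS b -> PS a *)

definition is_presheaf :: "('o, 'm, 'x) cyl_category_scheme \<Rightarrow> ('o, 'm, 'v) presheaf \<Rightarrow> bool" where
  "is_presheaf C F \<longleftrightarrow>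
     (\<forall>f\<in>Mor C. \<forall>x\<in>PS F (Cod C f). PM F f x \<in> PS F (Dom C f)) \<and>
     (\<forall>a\<in>Obj C. \<forall>x\<in>PS F a. PM F (Id C a) x = x) \<and>
     (\<forall>f\<in>Mor C. \<forall>g\<in>Mor C. Cod C f = Dom C g \<longrightarrow>
        (\<forall>x\<in>PS F (Cod C g). PM F (Comp C g f) x = PM F f (PM F g x))) \<and>
     \<comment> \<open>initial object goes to a singleton\<close>
     (\<forall>z. initial C z \<longrightarrow> (\<exists>v. PS F z = {v})) \<and>
     \<comment> \<open>pushouts along cofibrations go to pullbacks of sets\<close>
     (\<forall>f\<in>Cof C. \<forall>g p q. is_pushout C f g p q \<longrightarrow>
        bij_betw (\<lambda>x. (PM F p x, PM F q x)) (PS F (Cod C p))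
          {(y, w). y \<in> PS F (Cod C f) \<and> w \<in> PS F (Cod C g) \<and> PM F f y = PM F g w})"

definition presheaf_mor :: "('o, 'm, 'x) cyl_category_scheme \<Rightarrow> ('o, 'm, 'v) presheaf \<Rightarrow>
    ('o, 'm, 'v) presheaf \<Rightarrow> ('o \<Rightarrow> 'v \<Rightarrow> 'v) \<Rightarrow> bool" where
  "presheaf_mor C F G \<eta> \<longleftrightarrow>
     (\<forall>a\<in>Obj C. \<forall>x\<in>PS F a. \<eta> a x \<in> PS G a) \<and>
     (\<forall>f\<in>Mor C. \<forall>x\<in>PS F (Cod C f). \<eta> (Dom C f) (PM F f x) = PM G f (\<eta> (Cod C f) x))"

definition ps_comp :: "('o \<Rightarrow> 'v \<Rightarrow> 'v) \<Rightarrow> ('o \<Rightarrow> 'v \<Rightarrow> 'v) \<Rightarrow> ('o \<Rightarrow> 'v \<Rightarrow> 'v)" where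
  "ps_comp g f = (\<lambda>a x. g a (f a x))"

text \<open>Weak equivalences in \<open>\<widetilde>C\<close>; via Yoneda a map B -> X is an element of X(B).\<close>
definition ps_weq :: "('o, 'm, 'x) cyl_category_scheme \<Rightarrow> ('o, 'm, 'v) presheaf \<Rightarrow>
    ('o, 'm, 'v) presheaf \<Rightarrow> ('o \<Rightarrow> 'v \<Rightarrow> 'v) \<Rightarrow> bool" where
  "ps_weq C X Y f \<longleftrightarrow>
     (\<forall>i\<in>Cof C. \<forall>u\<in>PS X (Dom C i). \<forall>w\<in>PS Y (Cod C i).
        f (Dom C i) u = PM Y i w \<longrightarrow>
        (\<exists>a\<in>PS X (Cod C i). PM X i a = u \<and>
           (\<exists>p q j r h. rel_cylinder C i p q j r \<and> h \<in> PS Y (Cod C j) \<and>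
              PM Y (Comp C j p) h = f (Cod C i) a \<and> PM Y (Comp C j q) h = w)))"

end

theory Submission
  imports Defs
begin

text \<open>
  Call \<open>y, w \<in> Y(B)\<close> homotopic relative to a cofibration \<open>i : A \<rightarrow> B\<close> if they are the two ends
  of an element of \<open>Y(I\<^sub>AB)\<close> for some relative cylinder. Then \<open>f\<close> is a weak equivalence iff
  every lifting problem along a cofibration can be solved up to such a homotopy. Any map
  \<open>\<epsilon> : B \<squnion>\<^sub>A B \<rightarrow> E\<close> followed by a weak equivalence \<open>E \<rightarrow> B\<close> splitting the codiagonal already
  witnesses a homotopy, because factoring \<open>\<epsilon>\<close> as a cofibration followed by a weak equivalence
  produces a relative cylinder. With this freedom, homotopies can be concatenated by gluing
  cylinders along their trivially cofibrant ends, and natural maps carry homotopies to homotopies.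

  For \<open>g \<circ> f\<close>: lift through \<open>g\<close>, then through \<open>f\<close>, and concatenate the two homotopies.
  For \<open>f\<close>: solve the problem for \<open>g \<circ> f\<close>; the resulting homotopy between images under \<open>g\<close>
  is reflected by \<open>g\<close> by lifting along the cylinder inclusion \<open>B \<squnion>\<^sub>A B \<rightarrow> I\<^sub>AB\<close>.
  For \<open>g\<close>: since \<open>f\<close> is surjective up to homotopy on every object, \<open>u \<in> Y(A)\<close> is homotopic to
  some \<open>f x\<close> via \<open>H\<close>. Homotopy extension along mapping cylinders of \<open>i\<close> turns the problem for
  \<open>g\<close> into one for \<open>g \<circ> f\<close> and its solution back into a lift of \<open>u\<close>; gluing the two mapping
  cylinders along their common copy of the cylinder carrying \<open>H\<close> yields the required homotopy.
\<close>

locale cylinder_cat =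
  fixes C :: "('o, 'm, 'x) cyl_category_scheme"
  assumes cylinder_category: "cylinder_category C"
begin

abbreviation cmp (infixr "\<cdot>" 75) where "g \<cdot> f \<equiv> Comp C g f"

lemma is_category: "is_category C"
  using cylinder_category by (simp add: cylinder_category_def)

lemma Dom_in_Obj [simp]: "f \<in> Mor C \<Longrightarrow> Dom C f \<in> Obj C"
  and Cod_in_Obj [simp]: "f \<in> Mor C \<Longrightarrow> Cod C f \<in> Obj C"
  using is_category by (simp_all add: is_category_def)

lemma comp_in_hom: "f \<in> Mor C \<Longrightarrow> g \<in> Mor C \<Longrightarrow> Cod C f = Dom C g \<Longrightarrow> g \<cdot> f \<in> hom C (Dom C f) (Cod C g)"
  using is_category unfolding is_category_def by blast

lemma comp_in_Mor [simp]: "f \<in> Mor C \<Longrightarrow> g \<in> Mor C \<Longrightarrow> Cod C f = Dom C g \<Longrightarrow> g \<cdot> f \<in> Mor C"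
  and Dom_comp [simp]: "f \<in> Mor C \<Longrightarrow> g \<in> Mor C \<Longrightarrow> Cod C f = Dom C g \<Longrightarrow> Dom C (g \<cdot> f) = Dom C f"
  and Cod_comp [simp]: "f \<in> Mor C \<Longrightarrow> g \<in> Mor C \<Longrightarrow> Cod C f = Dom C g \<Longrightarrow> Cod C (g \<cdot> f) = Cod C g"
  using comp_in_hom unfolding hom_def by blast+

lemma comp_assoc [simp]:
  "f \<in> Mor C \<Longrightarrow> g \<in> Mor C \<Longrightarrow> h \<in> Mor C \<Longrightarrow> Cod C f = Dom C g \<Longrightarrow> Cod C g = Dom C h \<Longrightarrow>
   (h \<cdot> g) \<cdot> f = h \<cdot> (g \<cdot> f)"
  using is_category unfolding is_category_def by metis

lemma comp_eq_whisker:
  assumes "a \<cdot> b = c \<cdot> d" "a \<in> Mor C" "b \<in> Mor C" "c \<in> Mor C" "d \<in> Mor C" "x \<in> Mor C"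
    "Cod C b = Dom C a" "Cod C d = Dom C c" "Cod C x = Dom C b" "Cod C x = Dom C d"
  shows "a \<cdot> (b \<cdot> x) = c \<cdot> (d \<cdot> x)"
proof -
  have "a \<cdot> (b \<cdot> x) = (a \<cdot> b) \<cdot> x" using assms(2-) by simp
  also have "\<dots> = (c \<cdot> d) \<cdot> x" using assms(1) by simp
  also have "\<dots> = c \<cdot> (d \<cdot> x)" using assms(2-) by simp
  finally show ?thesis .
qed

lemma Id_in_hom: "a \<in> Obj C \<Longrightarrow> Id C a \<in> hom C a a"
  using is_category unfolding is_category_def by blast

lemma Id_in_Mor [simp]: "a \<in> Obj C \<Longrightarrow> Id C a \<in> Mor C"
  and Dom_Id [simp]: "a \<in> Obj C \<Longrightarrow> Dom C (Id C a) = a"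
  and Cod_Id [simp]: "a \<in> Obj C \<Longrightarrow> Cod C (Id C a) = a"
  using Id_in_hom unfolding hom_def by blast+

lemma Id_comp [simp]: "f \<in> Mor C \<Longrightarrow> Cod C f = b \<Longrightarrow> Id C b \<cdot> f = f"
  and comp_Id [simp]: "f \<in> Mor C \<Longrightarrow> Dom C f = a \<Longrightarrow> f \<cdot> Id C a = f"
  using is_category unfolding is_category_def by blast+

lemma Cof_subset_Mor: "Cof C \<subseteq> Mor C" and WE_subset_Mor: "WE C \<subseteq> Mor C"
  using cylinder_category by (simp_all add: cylinder_category_def)

lemma Cof_in_Mor [simp]: "f \<in> Cof C \<Longrightarrow> f \<in> Mor C"
  and WE_in_Mor [simp]: "f \<in> WE C \<Longrightarrow> f \<in> Mor C"
  using Cof_subset_Mor WE_subset_Mor by blast+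

lemma Id_in_WE [simp]: "a \<in> Obj C \<Longrightarrow> Id C a \<in> WE C"
proof -
  assume "a \<in> Obj C"
  then have "iso C (Id C a)"
    unfolding iso_def by (intro conjI bexI[of _ "Id C a"]) (simp_all add: Id_in_hom)
  then show ?thesis
    using cylinder_category unfolding cylinder_category_def by (elim conjE) blast
qed

lemma Cof_comp [simp]: "f \<in> Cof C \<Longrightarrow> g \<in> Cof C \<Longrightarrow> Cod C f = Dom C g \<Longrightarrow> g \<cdot> f \<in> Cof C"
proof -
  have "\<forall>f\<in>Cof C. \<forall>g\<in>Cof C. Cod C f = Dom C g \<longrightarrow> g \<cdot> f \<in> Cof C"
    using cylinder_category unfolding cylinder_category_def by (elim conjE) assumption
  then show "f \<in> Cof C \<Longrightarrow> g \<in> Cof C \<Longrightarrow> Cod C f = Dom C g \<Longrightarrow> g \<cdot> f \<in> Cof C" by blast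
qed

lemma WE_comp [simp]: "f \<in> WE C \<Longrightarrow> g \<in> WE C \<Longrightarrow> Cod C f = Dom C g \<Longrightarrow> g \<cdot> f \<in> WE C"
proof -
  have "\<forall>f\<in>WE C. \<forall>g\<in>WE C. Cod C f = Dom C g \<longrightarrow> g \<cdot> f \<in> WE C"
    using cylinder_category unfolding cylinder_category_def by (elim conjE) assumption
  then show "f \<in> WE C \<Longrightarrow> g \<in> WE C \<Longrightarrow> Cod C f = Dom C g \<Longrightarrow> g \<cdot> f \<in> WE C" by blast
qed

lemma WE_two_out_of_six:
  assumes "f \<in> Mor C" "g \<in> Mor C" "h \<in> Mor C" "Cod C h = Dom C g" "Cod C g = Dom C f"
    and "f \<cdot> g \<in> WE C" "g \<cdot> h \<in> WE C"
  shows "f \<in> WE C" "g \<in> WE C" "h \<in> WE C"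
proof -
  have "\<forall>f\<in>Mor C. \<forall>g\<in>Mor C. \<forall>h\<in>Mor C. Cod C h = Dom C g \<longrightarrow> Cod C g = Dom C f \<longrightarrow>
        f \<cdot> g \<in> WE C \<longrightarrow> g \<cdot> h \<in> WE C \<longrightarrow> f \<in> WE C \<and> g \<in> WE C \<and> h \<in> WE C"
    using cylinder_category unfolding cylinder_category_def by (elim conjE) blast
  then show "f \<in> WE C" "g \<in> WE C" "h \<in> WE C"
    using assms by blast+
qed

lemma WE_cancel_left:
  assumes "f \<in> Mor C" "g \<in> WE C" "Cod C f = Dom C g" "g \<cdot> f \<in> WE C"
  shows "f \<in> WE C"
  using WE_two_out_of_six(3)[of "Id C (Cod C g)" g f] assms by simp

lemma WE_cancel_right:
  assumes "f \<in> WE C" "g \<in> Mor C" "Cod C f = Dom C g" "g \<cdot> f \<in> WE C"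
  shows "g \<in> WE C"
  using WE_two_out_of_six(1)[of g f "Id C (Dom C f)"] assms by simp

lemma section_in_WE:
  assumes "f \<in> Mor C" "r \<in> WE C" "Cod C f = Dom C r" "r \<cdot> f = Id C (Dom C f)"
  shows "f \<in> WE C"
  using WE_cancel_left[OF assms(1-3)] assms(1,4) by simp

lemma retraction_in_WE:
  assumes "f \<in> WE C" "r \<in> Mor C" "Cod C f = Dom C r" "r \<cdot> f = Id C (Dom C f)"
  shows "r \<in> WE C"
  using WE_cancel_right[OF assms(1-3)] assms(1,4) by simp

lemma trivial_Cof_retraction:
  assumes "t \<in> Cof C" "t \<in> WE C"
  obtains r where "r \<in> Mor C" "Dom C r = Cod C t" "Cod C r = Dom C t" "r \<cdot> t = Id C (Dom C t)"
proof -
  have "\<forall>f\<in>Cof C \<inter> WE C. \<exists>r\<in>hom C (Cod C f) (Dom C f). r \<cdot> f = Id C (Dom C f)"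
    using cylinder_category unfolding cylinder_category_def by (elim conjE) assumption
  then show ?thesis using assms that unfolding hom_def by blast
qed

section \<open>Pushouts\<close>

lemma pushoutD:
  assumes "is_pushout C f g p q"
  shows "f \<in> Mor C" "g \<in> Mor C" "p \<in> Mor C" "q \<in> Mor C" "Dom C g = Dom C f"
    "Dom C p = Cod C f" "Dom C q = Cod C g" "Cod C q = Cod C p" "p \<cdot> f = q \<cdot> g"
  using assms unfolding is_pushout_def hom_def by auto

lemma pushout_induced:
  assumes "is_pushout C f g p q" "u \<in> Mor C" "v \<in> Mor C" "Dom C u = Cod C f" "Dom C v = Cod C g"
    "Cod C v = Cod C u" "u \<cdot> f = v \<cdot> g"
  obtains k where "k \<in> Mor C" "Dom C k = Cod C p" "Cod C k = Cod C u" "k \<cdot> p = u" "k \<cdot> q = v"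
proof -
  have "\<exists>!k. k \<in> hom C (Cod C p) (Cod C u) \<and> k \<cdot> p = u \<and> k \<cdot> q = v"
    using assms unfolding is_pushout_def hom_def by simp
  then show ?thesis using that unfolding hom_def by blast
qed

lemma pushout_map_eqI:
  assumes "is_pushout C f g p q" "k \<in> Mor C" "k' \<in> Mor C" "Dom C k = Cod C p" "Dom C k' = Cod C p"
    "Cod C k' = Cod C k" "k \<cdot> p = k' \<cdot> p" "k \<cdot> q = k' \<cdot> q"
  shows "k = k'"
proof -
  note P = pushoutD[OF assms(1)]
  have "(k \<cdot> p) \<cdot> f = k \<cdot> (q \<cdot> g)"
    using P assms(2,4) by simp
  also have "\<dots> = (k \<cdot> q) \<cdot> g"
    using P assms(2,4) by simp
  finally have "(k \<cdot> p) \<cdot> f = (k \<cdot> q) \<cdot> g" .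
  then have "\<exists>!h. h \<in> hom C (Cod C p) (Cod C k) \<and> h \<cdot> p = k \<cdot> p \<and> h \<cdot> q = k \<cdot> q"
    using assms(1,2,4) P unfolding is_pushout_def hom_def by simp
  moreover have "k \<in> hom C (Cod C p) (Cod C k)" "k' \<in> hom C (Cod C p) (Cod C k)"
    using assms(2-6) unfolding hom_def by simp_all
  ultimately show ?thesis using assms(7,8) by metis
qed

lemma pushoutI:
  assumes "f \<in> Mor C" "g \<in> Mor C" "p \<in> Mor C" "q \<in> Mor C" "Dom C g = Dom C f"
    "Dom C p = Cod C f" "Dom C q = Cod C g" "Cod C q = Cod C p" "p \<cdot> f = q \<cdot> g"
    and induced: "\<And>u v. u \<in> Mor C \<Longrightarrow> v \<in> Mor C \<Longrightarrow> Dom C u = Cod C f \<Longrightarrow> Dom C v = Cod C g \<Longrightarrow>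
      Cod C v = Cod C u \<Longrightarrow> u \<cdot> f = v \<cdot> g \<Longrightarrow>
      \<exists>k\<in>Mor C. Dom C k = Cod C p \<and> Cod C k = Cod C u \<and> k \<cdot> p = u \<and> k \<cdot> q = v"
    and unique: "\<And>k k'. k \<in> Mor C \<Longrightarrow> k' \<in> Mor C \<Longrightarrow> Dom C k = Cod C p \<Longrightarrow> Dom C k' = Cod C p \<Longrightarrow>
      Cod C k' = Cod C k \<Longrightarrow> k \<cdot> p = k' \<cdot> p \<Longrightarrow> k \<cdot> q = k' \<cdot> q \<Longrightarrow> k = k'"
  shows "is_pushout C f g p q"
  unfolding is_pushout_def
proof (intro conjI ballI impI)
  fix e u v assume "e \<in> Obj C" "u \<in> hom C (Cod C f) e" "v \<in> hom C (Cod C g) e" "u \<cdot> f = v \<cdot> g"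
  then obtain k where "k \<in> Mor C" "Dom C k = Cod C p" "Cod C k = e" "k \<cdot> p = u" "k \<cdot> q = v"
    using induced[of u v] unfolding hom_def by auto
  then show "\<exists>!k. k \<in> hom C (Cod C p) e \<and> k \<cdot> p = u \<and> k \<cdot> q = v"
    using unique unfolding hom_def by (intro ex1I[of _ k]) auto
qed (use assms(1-9) in \<open>auto simp: hom_def\<close>)

lemma pushout_sym:
  assumes "is_pushout C f g p q"
  shows "is_pushout C g f q p"
proof -
  note P = pushoutD[OF assms]
  show ?thesis
  proof (rule pushoutI)
    fix u v assume "u \<in> Mor C" "v \<in> Mor C" "Dom C u = Cod C g" "Dom C v = Cod C f"
      "Cod C v = Cod C u" "u \<cdot> g = v \<cdot> f"
    then show "\<exists>k\<in>Mor C. Dom C k = Cod C q \<and> Cod C k = Cod C u \<and> k \<cdot> q = u \<and> k \<cdot> p = v"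
      using pushout_induced[OF assms, of v u] P by metis
  qed (use P pushout_map_eqI[OF assms] in auto)
qed

lemma pushout_along_Cof:
  "\<forall>f\<in>Cof C. \<forall>g\<in>Mor C. Dom C g = Dom C f \<longrightarrow>
     (\<exists>p q. is_pushout C f g p q) \<and> (\<forall>p q. is_pushout C f g p q \<longrightarrow> q \<in> Cof C)"
  using cylinder_category unfolding cylinder_category_def by (elim conjE) assumption

lemma pushout_exists:
  assumes "f \<in> Cof C" "g \<in> Mor C" "Dom C g = Dom C f"
  obtains p q where "is_pushout C f g p q"
  using pushout_along_Cof assms that by blast

lemma pushout_Cof: "f \<in> Cof C \<Longrightarrow> is_pushout C f g p q \<Longrightarrow> q \<in> Cof C"
  using pushout_along_Cof pushoutD(2,5) by blast

lemma pushout_Cof_sym: "g \<in> Cof C \<Longrightarrow> is_pushout C f g p q \<Longrightarrow> p \<in> Cof C"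
  using pushout_Cof pushout_sym by blast

lemma pushout_WE: "f \<in> Cof C \<Longrightarrow> f \<in> WE C \<Longrightarrow> is_pushout C f g p q \<Longrightarrow> q \<in> WE C"
proof -
  have "\<forall>f\<in>Cof C \<inter> WE C. \<forall>g p q. is_pushout C f g p q \<longrightarrow> q \<in> Cof C \<inter> WE C"
    using cylinder_category unfolding cylinder_category_def by (elim conjE) assumption
  then show "f \<in> Cof C \<Longrightarrow> f \<in> WE C \<Longrightarrow> is_pushout C f g p q \<Longrightarrow> q \<in> WE C" by blast
qed

lemma pushout_WE_sym: "g \<in> Cof C \<Longrightarrow> g \<in> WE C \<Longrightarrow> is_pushout C f g p q \<Longrightarrow> p \<in> WE C"
  using pushout_WE pushout_sym by blast

lemma pushout_induced_WE:
  assumes po: "is_pushout C c d \<alpha> \<beta>" and c: "c \<in> Cof C" "c \<in> WE C"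
    and \<rho>: "\<rho>\<^sub>1 \<in> Mor C" "\<rho>\<^sub>2 \<in> WE C" "Dom C \<rho>\<^sub>1 = Cod C c" "Dom C \<rho>\<^sub>2 = Cod C d" "Cod C \<rho>\<^sub>2 = Cod C \<rho>\<^sub>1"
      "\<rho>\<^sub>1 \<cdot> c = \<rho>\<^sub>2 \<cdot> d"
  obtains \<rho> where "\<rho> \<in> WE C" "Dom C \<rho> = Cod C \<alpha>" "Cod C \<rho> = Cod C \<rho>\<^sub>1" "\<rho> \<cdot> \<alpha> = \<rho>\<^sub>1" "\<rho> \<cdot> \<beta> = \<rho>\<^sub>2"
proof -
  note P = pushoutD[OF po]
  obtain \<rho> where \<rho>': "\<rho> \<in> Mor C" "Dom C \<rho> = Cod C \<alpha>" "Cod C \<rho> = Cod C \<rho>\<^sub>1" "\<rho> \<cdot> \<alpha> = \<rho>\<^sub>1" "\<rho> \<cdot> \<beta> = \<rho>\<^sub>2"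
    using pushout_induced[OF po \<rho>(1) _ \<rho>(3,4,5,6)] \<rho>(2) by auto
  moreover have "\<rho> \<in> WE C"
    using WE_cancel_right[OF pushout_WE[OF c po] \<rho>'(1)] \<rho>' \<rho>(2) P by simp
  ultimately show ?thesis using that by blast
qed

lemma pushout_pasting_cancel:
  assumes A: "is_pushout C f g p q"
    and outer: "is_pushout C f (h \<cdot> g) (\<sigma> \<cdot> p) q'"
    and maps: "h \<in> Mor C" "\<sigma> \<in> Mor C" "Dom C h = Cod C g" "Dom C \<sigma> = Cod C p" "\<sigma> \<cdot> q = q' \<cdot> h"
  shows "is_pushout C q h \<sigma> q'"
proof -
  note PA = pushoutD[OF A] and PO = pushoutD[OF outer]
  have q': "q' \<in> Mor C" "Dom C q' = Cod C h" "Cod C q' = Cod C \<sigma>"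
    using PO PA maps by auto
  show ?thesis
  proof (rule pushoutI)
    fix u v assume uv: "u \<in> Mor C" "v \<in> Mor C" "Dom C u = Cod C q" "Dom C v = Cod C h"
      "Cod C v = Cod C u" "u \<cdot> q = v \<cdot> h"
    have "(u \<cdot> p) \<cdot> f = u \<cdot> (q \<cdot> g)"
      using uv PA by simp
    also have "\<dots> = v \<cdot> (h \<cdot> g)"
      by (rule comp_eq_whisker[OF uv(6)]) (use uv PA maps in auto)
    finally have "(u \<cdot> p) \<cdot> f = v \<cdot> (h \<cdot> g)" .
    then obtain k where k: "k \<in> Mor C" "Dom C k = Cod C \<sigma>" "Cod C k = Cod C u"
      "k \<cdot> (\<sigma> \<cdot> p) = u \<cdot> p" "k \<cdot> q' = v"
      using pushout_induced[OF outer, of "u \<cdot> p" v] uv PA maps by auto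
    have "k \<cdot> \<sigma> = u"
    proof (rule pushout_map_eqI[OF A])
      show "(k \<cdot> \<sigma>) \<cdot> p = u \<cdot> p" using k PA maps by simp
      have "(k \<cdot> \<sigma>) \<cdot> q = (k \<cdot> q') \<cdot> h" using k(1-3) PA maps q' by simp
      then show "(k \<cdot> \<sigma>) \<cdot> q = u \<cdot> q" using k(5) uv(6) by simp
    qed (use k uv PA maps in auto)
    then show "\<exists>k\<in>Mor C. Dom C k = Cod C \<sigma> \<and> Cod C k = Cod C u \<and> k \<cdot> \<sigma> = u \<and> k \<cdot> q' = v"
      using k by blast
  next
    fix k k' assume kk: "k \<in> Mor C" "k' \<in> Mor C" "Dom C k = Cod C \<sigma>" "Dom C k' = Cod C \<sigma>"
      "Cod C k' = Cod C k" "k \<cdot> \<sigma> = k' \<cdot> \<sigma>" "k \<cdot> q' = k' \<cdot> q'"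
    have "k \<cdot> (\<sigma> \<cdot> p) = k' \<cdot> (\<sigma> \<cdot> p)"
      by (rule comp_eq_whisker[OF kk(6)]) (use kk PA maps in auto)
    with kk show "k = k'"
      using pushout_map_eqI[OF outer, of k k'] PA maps by auto
  qed (use PA maps q' in auto)
qed

lemma pushout_pasting:
  assumes A: "is_pushout C f g p q" and B: "is_pushout C h p p' q'"
  shows "is_pushout C (h \<cdot> f) g p' (q' \<cdot> q)"
proof -
  note PA = pushoutD[OF A] and PB = pushoutD[OF B]
  show ?thesis
  proof (rule pushoutI)
    fix u v assume uv: "u \<in> Mor C" "v \<in> Mor C" "Dom C u = Cod C (h \<cdot> f)" "Dom C v = Cod C g"
      "Cod C v = Cod C u" "u \<cdot> (h \<cdot> f) = v \<cdot> g"
    have "(u \<cdot> h) \<cdot> f = v \<cdot> g" using uv PA PB by simp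
    then obtain k\<^sub>1 where k\<^sub>1: "k\<^sub>1 \<in> Mor C" "Dom C k\<^sub>1 = Cod C p" "Cod C k\<^sub>1 = Cod C u"
      "k\<^sub>1 \<cdot> p = u \<cdot> h" "k\<^sub>1 \<cdot> q = v"
      using pushout_induced[OF A, of "u \<cdot> h" v] uv PA PB by auto
    then obtain k where k: "k \<in> Mor C" "Dom C k = Cod C p'" "Cod C k = Cod C u"
      "k \<cdot> p' = u" "k \<cdot> q' = k\<^sub>1"
      using pushout_induced[OF B, of u k\<^sub>1] uv PA PB by auto
    have "k \<cdot> (q' \<cdot> q) = (k \<cdot> q') \<cdot> q" using k(1-3) PA PB by simp
    then have "k \<cdot> (q' \<cdot> q) = v" using k(5) k\<^sub>1(5) by simp
    then show "\<exists>k\<in>Mor C. Dom C k = Cod C p' \<and> Cod C k = Cod C u \<and> k \<cdot> p' = u \<and> k \<cdot> (q' \<cdot> q) = v"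
      using k by blast
  next
    fix k k' assume kk: "k \<in> Mor C" "k' \<in> Mor C" "Dom C k = Cod C p'" "Dom C k' = Cod C p'"
      "Cod C k' = Cod C k" "k \<cdot> p' = k' \<cdot> p'" "k \<cdot> (q' \<cdot> q) = k' \<cdot> (q' \<cdot> q)"
    have "k \<cdot> q' = k' \<cdot> q'"
    proof (rule pushout_map_eqI[OF A])
      have "(k \<cdot> q') \<cdot> p = (k \<cdot> p') \<cdot> h" "(k' \<cdot> q') \<cdot> p = (k' \<cdot> p') \<cdot> h"
        using kk(1-5) PB by simp_all
      then show "(k \<cdot> q') \<cdot> p = (k' \<cdot> q') \<cdot> p" using kk(6) by (simp only:)
      show "(k \<cdot> q') \<cdot> q = (k' \<cdot> q') \<cdot> q" using kk PA PB by simp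
    qed (use kk PA PB in auto)
    then show "k = k'" using pushout_map_eqI[OF B] kk by blast
  next
    have "p' \<cdot> (h \<cdot> f) = q' \<cdot> (p \<cdot> f)"
      by (rule comp_eq_whisker[OF PB(9)]) (use PA PB in auto)
    then show "p' \<cdot> (h \<cdot> f) = (q' \<cdot> q) \<cdot> g" using PA PB by simp
  qed (use PA PB in auto)
qed

section \<open>Coproducts, cylinders and factorization\<close>

definition init_obj :: 'o where
  "init_obj = (SOME z. initial C z)"

definition init_map :: "'o \<Rightarrow> 'm" where
  "init_map a = (THE f. f \<in> hom C init_obj a)"

lemma initial_init_obj: "initial C init_obj"
proof -
  have "\<exists>z. initial C z"
    using cylinder_category unfolding cylinder_category_def by (elim conjE) assumption
  then show ?thesis unfolding init_obj_def by (rule someI_ex)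
qed

lemma init_obj_in_Obj [simp]: "init_obj \<in> Obj C"
  using initial_init_obj unfolding initial_def by blast

lemma init_map_in_hom: "a \<in> Obj C \<Longrightarrow> init_map a \<in> hom C init_obj a"
  unfolding init_map_def using initial_init_obj unfolding initial_def by (metis theI')

lemma init_map_in_Mor [simp]: "a \<in> Obj C \<Longrightarrow> init_map a \<in> Mor C"
  and Dom_init_map [simp]: "a \<in> Obj C \<Longrightarrow> Dom C (init_map a) = init_obj"
  and Cod_init_map [simp]: "a \<in> Obj C \<Longrightarrow> Cod C (init_map a) = a"
  using init_map_in_hom unfolding hom_def by auto

lemma init_map_unique:
  assumes "f \<in> Mor C" "Dom C f = init_obj"
  shows "f = init_map (Cod C f)"
proof -
  have "\<exists>!g. g \<in> hom C init_obj (Cod C f)"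
    using initial_init_obj assms(1) unfolding initial_def by simp
  moreover have "f \<in> hom C init_obj (Cod C f)"
    using assms unfolding hom_def by simp
  ultimately show ?thesis
    using init_map_in_hom[of "Cod C f"] assms(1) by (metis Cod_in_Obj)
qed

lemma init_map_in_Cof [simp]: "a \<in> Obj C \<Longrightarrow> init_map a \<in> Cof C"
proof -
  have "\<forall>z. initial C z \<longrightarrow> (\<forall>x\<in>Obj C. hom C z x \<subseteq> Cof C)"
    using cylinder_category unfolding cylinder_category_def by (elim conjE) assumption
  then show "a \<in> Obj C \<Longrightarrow> init_map a \<in> Cof C"
    using initial_init_obj init_map_in_hom by blast
qed

lemma coproduct_exists:
  assumes "a \<in> Obj C" "b \<in> Obj C"
  obtains p q where "is_pushout C (init_map a) (init_map b) p q"
  using pushout_exists[of "init_map a" "init_map b"] assms by auto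

lemma coproduct_induced:
  assumes "is_pushout C (init_map a) (init_map b) p q" "a \<in> Obj C" "b \<in> Obj C"
    "u \<in> Mor C" "v \<in> Mor C" "Dom C u = a" "Dom C v = b" "Cod C v = Cod C u"
  obtains k where "k \<in> Mor C" "Dom C k = Cod C p" "Cod C k = Cod C u" "k \<cdot> p = u" "k \<cdot> q = v"
proof -
  have "u \<cdot> init_map a = v \<cdot> init_map b"
    using assms init_map_unique[of "u \<cdot> init_map a"] init_map_unique[of "v \<cdot> init_map b"] by simp
  then show ?thesis using pushout_induced[OF assms(1), of u v] assms that by auto
qed

lemma rel_cylinderD:
  assumes "rel_cylinder C i p q j r"
  shows "is_pushout C i i p q" "j \<in> Cof C" "r \<in> WE C" "j \<in> Mor C" "Dom C j = Cod C p"
    "r \<in> Mor C" "Dom C r = Cod C j" "Cod C r = Cod C i"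
    "r \<cdot> (j \<cdot> p) = Id C (Cod C i)" "r \<cdot> (j \<cdot> q) = Id C (Cod C i)"
  using assms unfolding rel_cylinder_def hom_def by auto

lemma cylinder_exists:
  assumes "a \<in> Obj C" "is_pushout C (init_map a) (init_map a) p q"
  obtains j r where "rel_cylinder C (init_map a) p q j r"
proof -
  have "\<forall>x\<in>Obj C. \<forall>z e p q. initial C z \<longrightarrow> e \<in> hom C z x \<longrightarrow> is_pushout C e e p q \<longrightarrow>
        (\<exists>j r. j \<in> Cof C \<and> r \<in> WE C \<and>
           j \<in> hom C (Cod C p) (Cod C j) \<and> r \<in> hom C (Cod C j) x \<and>
           r \<cdot> (j \<cdot> p) = Id C x \<and> r \<cdot> (j \<cdot> q) = Id C x)"
    using cylinder_category unfolding cylinder_category_def by (elim conjE) assumption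
  then show ?thesis
    using assms that initial_init_obj init_map_in_hom[OF assms(1)]
    unfolding rel_cylinder_def by fastforce
qed

text \<open>A cylinder on \<open>A = Dom e\<^sub>0\<close>, given by its two end inclusions \<open>e\<^sub>0, e\<^sub>1 : A \<rightarrow> I\<close> and the
  collapse \<open>r : I \<rightarrow> A\<close>.\<close>
definition cylinder_data :: "'m \<Rightarrow> 'm \<Rightarrow> 'm \<Rightarrow> bool" where
  "cylinder_data e\<^sub>0 e\<^sub>1 r \<longleftrightarrow>
     e\<^sub>0 \<in> Cof C \<and> e\<^sub>1 \<in> Cof C \<and> Dom C e\<^sub>1 = Dom C e\<^sub>0 \<and> Cod C e\<^sub>1 = Cod C e\<^sub>0 \<and>
     r \<in> WE C \<and> Dom C r = Cod C e\<^sub>0 \<and> Cod C r = Dom C e\<^sub>0 \<and>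
     r \<cdot> e\<^sub>0 = Id C (Dom C e\<^sub>0) \<and> r \<cdot> e\<^sub>1 = Id C (Dom C e\<^sub>0)"

lemma cylinder_data_sym: "cylinder_data e\<^sub>0 e\<^sub>1 r \<Longrightarrow> cylinder_data e\<^sub>1 e\<^sub>0 r"
  unfolding cylinder_data_def by auto

lemma cylinder_data_WE: "cylinder_data e\<^sub>0 e\<^sub>1 r \<Longrightarrow> e\<^sub>0 \<in> WE C"
  unfolding cylinder_data_def by (auto intro: section_in_WE)

lemma rel_cylinder_ends:
  assumes "i \<in> Cof C" "rel_cylinder C i p q j r"
  shows "cylinder_data (j \<cdot> p) (j \<cdot> q) r"
proof -
  note R = rel_cylinderD[OF assms(2)]
  note P = pushoutD[OF R(1)]
  have "p \<in> Cof C" "q \<in> Cof C"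
    using pushout_Cof[OF assms(1) R(1)] pushout_Cof_sym[OF assms(1) R(1)] by simp_all
  then show ?thesis unfolding cylinder_data_def using R P by simp
qed

text \<open>Brown's factorization through the mapping cylinder of \<open>\<phi> : S \<rightarrow> T\<close>, obtained by gluing a
  cylinder \<open>I\<close> on \<open>S\<close> to \<open>S \<squnion> T\<close> along \<open>S \<squnion> S\<close>:
  the inclusion of \<open>T\<close> into \<open>E\<close> is a pushout of the trivial cofibration \<open>j \<circ> Q\<close> along \<open>\<phi>\<close>
  (pasting of pushouts), and it is a section of the collapse \<open>\<pi>\<close>.\<close>
lemma factorization:
  assumes \<phi>: "\<phi> \<in> Mor C"
  obtains \<kappa> \<pi> where "\<kappa> \<in> Cof C" "\<pi> \<in> WE C" "Dom C \<kappa> = Dom C \<phi>" "Dom C \<pi> = Cod C \<kappa>"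
    "Cod C \<pi> = Cod C \<phi>" "\<pi> \<cdot> \<kappa> = \<phi>"
proof -
  define S T where "S = Dom C \<phi>" and "T = Cod C \<phi>"
  have S: "S \<in> Obj C" and T: "T \<in> Obj C" using \<phi> by (auto simp: S_def T_def)
  obtain P Q where PQ: "is_pushout C (init_map S) (init_map S) P Q"
    using coproduct_exists S by blast
  obtain j r where cyl: "rel_cylinder C (init_map S) P Q j r"
    using cylinder_exists[OF S PQ] by blast
  note R = rel_cylinderD[OF cyl] and PQp = pushoutD[OF PQ]
  obtain p' q' where pq: "is_pushout C (init_map S) (init_map T) p' q'"
    using coproduct_exists S T by blast
  note pqp = pushoutD[OF pq]
  have p'_Cof: "p' \<in> Cof C" using pushout_Cof_sym[OF init_map_in_Cof[OF T] pq] .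
  obtain \<sigma> where \<sigma>: "\<sigma> \<in> Mor C" "Dom C \<sigma> = Cod C P" "Cod C \<sigma> = Cod C p'" "\<sigma> \<cdot> P = p'"
    "\<sigma> \<cdot> Q = q' \<cdot> \<phi>"
    using coproduct_induced[OF PQ S S, of p' "q' \<cdot> \<phi>"] pqp PQp \<phi> S T by (auto simp: S_def T_def)
  obtain \<alpha> \<beta> where ab: "is_pushout C j \<sigma> \<alpha> \<beta>"
    using pushout_exists[of j \<sigma>] R \<sigma> by auto
  note abp = pushoutD[OF ab]
  obtain \<tau> where \<tau>: "\<tau> \<in> Mor C" "Dom C \<tau> = Cod C p'" "Cod C \<tau> = T" "\<tau> \<cdot> p' = \<phi>" "\<tau> \<cdot> q' = Id C T"
    using coproduct_induced[OF pq S T, of \<phi> "Id C T"] \<phi> T by (auto simp: S_def T_def)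
  have "(\<phi> \<cdot> r) \<cdot> j = \<tau> \<cdot> \<sigma>"
  proof (rule pushout_map_eqI[OF PQ])
    show "((\<phi> \<cdot> r) \<cdot> j) \<cdot> P = (\<tau> \<cdot> \<sigma>) \<cdot> P"
      using R PQp \<phi> \<sigma> \<tau> by (simp add: S_def T_def)
    have "((\<phi> \<cdot> r) \<cdot> j) \<cdot> Q = \<phi>"
      using R PQp \<phi> by (simp add: S_def)
    also have "\<dots> = (\<tau> \<cdot> q') \<cdot> \<phi>"
      using \<tau> \<phi> by (simp add: T_def)
    also have "\<dots> = (\<tau> \<cdot> \<sigma>) \<cdot> Q"
      using \<tau>(1-3) \<sigma> pqp PQp \<phi> by (simp add: T_def)
    finally show "((\<phi> \<cdot> r) \<cdot> j) \<cdot> Q = (\<tau> \<cdot> \<sigma>) \<cdot> Q" .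
  qed (use R PQp \<phi> \<sigma> \<tau> in \<open>auto simp: S_def T_def\<close>)
  then obtain \<pi> where \<pi>: "\<pi> \<in> Mor C" "Dom C \<pi> = Cod C \<alpha>" "Cod C \<pi> = T" "\<pi> \<cdot> \<alpha> = \<phi> \<cdot> r"
    "\<pi> \<cdot> \<beta> = \<tau>"
    using pushout_induced[OF ab, of "\<phi> \<cdot> r" \<tau>] R \<phi> \<sigma> \<tau> abp by (auto simp: S_def T_def)
  have "is_pushout C (init_map S) (\<phi> \<cdot> init_map S) (\<sigma> \<cdot> P) q'"
    using pq \<sigma>(4) init_map_unique[of "\<phi> \<cdot> init_map S"] \<phi> S by (simp add: S_def T_def)
  then have "is_pushout C Q \<phi> \<sigma> q'"
    by (rule pushout_pasting_cancel[OF PQ _ \<phi> \<sigma>(1) _ \<sigma>(2) \<sigma>(5)]) (use PQp \<phi> S in \<open>simp add: S_def\<close>)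
  then have jQ: "is_pushout C (j \<cdot> Q) \<phi> \<alpha> (\<beta> \<cdot> q')"
    using pushout_pasting ab by blast
  have "j \<cdot> Q \<in> Cof C" "j \<cdot> Q \<in> WE C"
    using rel_cylinder_ends[OF _ cyl] cylinder_data_WE[OF cylinder_data_sym] S
    unfolding cylinder_data_def by auto
  then have "\<beta> \<cdot> q' \<in> WE C"
    using pushout_WE[OF _ _ jQ] by blast
  moreover have "\<pi> \<cdot> (\<beta> \<cdot> q') = Id C T"
    using \<pi> \<tau> pqp abp \<sigma> by (simp del: comp_assoc add: comp_assoc[symmetric])
  ultimately have "\<pi> \<in> WE C"
    using retraction_in_WE[of "\<beta> \<cdot> q'" \<pi>] \<pi> pqp abp \<sigma> T by simp
  moreover have "\<beta> \<cdot> p' \<in> Cof C"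
    using pushout_Cof[OF R(2) ab] p'_Cof abp \<sigma> pqp by simp
  moreover have "\<pi> \<cdot> (\<beta> \<cdot> p') = \<phi>"
    using \<pi> \<tau> pqp abp \<sigma> by (simp del: comp_assoc add: comp_assoc[symmetric])
  ultimately show ?thesis
    using that[of "\<beta> \<cdot> p'" \<pi>] \<pi> pqp abp \<sigma> S T by (simp add: S_def T_def)
qed

section \<open>Presheaves\<close>

lemma PM_in_PS [simp]:
  assumes "is_presheaf C F" "f \<in> Mor C" "Dom C f = a" "x \<in> PS F (Cod C f)"
  shows "PM F f x \<in> PS F a"
proof -
  have "\<forall>f\<in>Mor C. \<forall>x\<in>PS F (Cod C f). PM F f x \<in> PS F (Dom C f)"
    using assms(1) unfolding is_presheaf_def by (elim conjE) assumption
  then show ?thesis using assms(2-) by blast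
qed

lemma PM_Id [simp]:
  assumes "is_presheaf C F" "a \<in> Obj C" "x \<in> PS F a"
  shows "PM F (Id C a) x = x"
proof -
  have "\<forall>a\<in>Obj C. \<forall>x\<in>PS F a. PM F (Id C a) x = x"
    using assms(1) unfolding is_presheaf_def by (elim conjE) assumption
  then show ?thesis using assms(2-) by blast
qed

lemma PM_comp [simp]:
  assumes "is_presheaf C F" "f \<in> Mor C" "g \<in> Mor C" "Cod C f = Dom C g" "x \<in> PS F (Cod C g)"
  shows "PM F (g \<cdot> f) x = PM F f (PM F g x)"
proof -
  have "\<forall>f\<in>Mor C. \<forall>g\<in>Mor C. Cod C f = Dom C g \<longrightarrow>
          (\<forall>x\<in>PS F (Cod C g). PM F (g \<cdot> f) x = PM F f (PM F g x))"
    using assms(1) unfolding is_presheaf_def by (elim conjE) assumption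
  then show ?thesis using assms(2-) by blast
qed

lemma PS_init_obj_singleton:
  assumes "is_presheaf C F"
  obtains v where "PS F init_obj = {v}"
proof -
  have "\<forall>z. initial C z \<longrightarrow> (\<exists>v. PS F z = {v})"
    using assms unfolding is_presheaf_def by (elim conjE) assumption
  then show ?thesis using initial_init_obj that by blast
qed

lemma presheaf_pushout_bij:
  assumes "is_presheaf C F" "is_pushout C c g p q" "c \<in> Cof C"
  shows "bij_betw (\<lambda>x. (PM F p x, PM F q x)) (PS F (Cod C p))
          {(y, w). y \<in> PS F (Cod C c) \<and> w \<in> PS F (Cod C g) \<and> PM F c y = PM F g w}"
proof -
  have "\<forall>c\<in>Cof C. \<forall>g p q. is_pushout C c g p q \<longrightarrow>
          bij_betw (\<lambda>x. (PM F p x, PM F q x)) (PS F (Cod C p))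
            {(y, w). y \<in> PS F (Cod C c) \<and> w \<in> PS F (Cod C g) \<and> PM F c y = PM F g w}"
    using assms(1) unfolding is_presheaf_def by (elim conjE) assumption
  then show ?thesis using assms(2,3) by blast
qed

lemma presheaf_pushout_glue:
  assumes "is_presheaf C F" "is_pushout C c g p q" "c \<in> Cof C" "y \<in> PS F (Cod C c)"
    "w \<in> PS F (Cod C g)" "PM F c y = PM F g w"
  obtains x where "x \<in> PS F (Cod C p)" "PM F p x = y" "PM F q x = w"
proof -
  have "(y, w) \<in> (\<lambda>x. (PM F p x, PM F q x)) ` PS F (Cod C p)"
    using presheaf_pushout_bij[OF assms(1-3)] assms(4-6) unfolding bij_betw_def by auto
  then show ?thesis using that by auto
qed

lemma presheaf_pushout_eqI:
  assumes "is_presheaf C F" "is_pushout C c g p q" "c \<in> Cof C" "x \<in> PS F (Cod C p)"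
    "x' \<in> PS F (Cod C p)" "PM F p x = PM F p x'" "PM F q x = PM F q x'"
  shows "x = x'"
  using presheaf_pushout_bij[OF assms(1-3)] assms(4-7) unfolding bij_betw_def inj_on_def by auto

lemma presheaf_extend_trivial_Cof:
  assumes "is_presheaf C F" "t \<in> Cof C" "t \<in> WE C" "y \<in> PS F (Dom C t)"
  obtains x where "x \<in> PS F (Cod C t)" "PM F t x = y"
proof -
  obtain r where r: "r \<in> Mor C" "Dom C r = Cod C t" "Cod C r = Dom C t" "r \<cdot> t = Id C (Dom C t)"
    using trivial_Cof_retraction assms(2,3) by blast
  have "PM F (r \<cdot> t) y = PM F t (PM F r y)"
    by (rule PM_comp) (use assms r in auto)
  then show ?thesis
    using that[of "PM F r y"] assms r by simp
qed

lemma presheaf_mor_in_PS [simp]: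
  "presheaf_mor C F G \<eta> \<Longrightarrow> a \<in> Obj C \<Longrightarrow> x \<in> PS F a \<Longrightarrow> \<eta> a x \<in> PS G a"
  unfolding presheaf_mor_def by blast

lemma presheaf_mor_natural:
  "presheaf_mor C F G \<eta> \<Longrightarrow> f \<in> Mor C \<Longrightarrow> x \<in> PS F (Cod C f) \<Longrightarrow>
   \<eta> (Dom C f) (PM F f x) = PM G f (\<eta> (Cod C f) x)"
  unfolding presheaf_mor_def by blast

section \<open>Homotopy relative to a cofibration\<close>

definition rel_homotopic :: "('o, 'm, 'v) presheaf \<Rightarrow> 'm \<Rightarrow> 'v \<Rightarrow> 'v \<Rightarrow> bool" where
  "rel_homotopic Y i y w \<longleftrightarrow>
     (\<exists>p q j r h. rel_cylinder C i p q j r \<and> h \<in> PS Y (Cod C j) \<and>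
        PM Y (j \<cdot> p) h = y \<and> PM Y (j \<cdot> q) h = w)"

lemma ps_weqI:
  assumes "\<And>i u w. i \<in> Cof C \<Longrightarrow> u \<in> PS X (Dom C i) \<Longrightarrow> w \<in> PS Y (Cod C i) \<Longrightarrow>
    f (Dom C i) u = PM Y i w \<Longrightarrow>
    \<exists>a\<in>PS X (Cod C i). PM X i a = u \<and> rel_homotopic Y i (f (Cod C i) a) w"
  shows "ps_weq C X Y f"
  using assms unfolding ps_weq_def rel_homotopic_def by blast

lemma ps_weqE:
  assumes "ps_weq C X Y f" "i \<in> Cof C" "u \<in> PS X (Dom C i)" "w \<in> PS Y (Cod C i)"
    "f (Dom C i) u = PM Y i w"
  obtains a where "a \<in> PS X (Cod C i)" "PM X i a = u" "rel_homotopic Y i (f (Cod C i) a) w"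
  using assms unfolding ps_weq_def rel_homotopic_def by blast

lemma rel_homotopicI_weak_cylinder:
  assumes Z: "is_presheaf C Z" and PQ: "is_pushout C i i P Q"
    and \<epsilon>: "\<epsilon> \<in> Mor C" "Dom C \<epsilon> = Cod C P"
    and \<rho>: "\<rho> \<in> WE C" "Dom C \<rho> = Cod C \<epsilon>" "Cod C \<rho> = Cod C i"
      "\<rho> \<cdot> (\<epsilon> \<cdot> P) = Id C (Cod C i)" "\<rho> \<cdot> (\<epsilon> \<cdot> Q) = Id C (Cod C i)"
    and h: "h \<in> PS Z (Cod C \<epsilon>)"
  shows "rel_homotopic Z i (PM Z (\<epsilon> \<cdot> P) h) (PM Z (\<epsilon> \<cdot> Q) h)"
proof -
  note P = pushoutD[OF PQ]
  obtain \<kappa> \<pi> where \<kappa>\<pi>: "\<kappa> \<in> Cof C" "\<pi> \<in> WE C" "Dom C \<kappa> = Dom C \<epsilon>" "Dom C \<pi> = Cod C \<kappa>"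
    "Cod C \<pi> = Cod C \<epsilon>" "\<pi> \<cdot> \<kappa> = \<epsilon>"
    using factorization[OF \<epsilon>(1)] by blast
  have mor: "\<kappa> \<in> Mor C" "\<pi> \<in> Mor C" "\<rho> \<in> Mor C" using \<kappa>\<pi> \<rho> by auto
  have "\<pi> \<cdot> (\<kappa> \<cdot> P) = (\<pi> \<cdot> \<kappa>) \<cdot> P" "\<pi> \<cdot> (\<kappa> \<cdot> Q) = (\<pi> \<cdot> \<kappa>) \<cdot> Q"
    using mor \<kappa>\<pi>(3-5) \<epsilon> P by simp_all
  then have \<pi>\<kappa>: "\<pi> \<cdot> (\<kappa> \<cdot> P) = \<epsilon> \<cdot> P" "\<pi> \<cdot> (\<kappa> \<cdot> Q) = \<epsilon> \<cdot> Q"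
    using \<kappa>\<pi>(6) by simp_all
  then have "rel_cylinder C i P Q \<kappa> (\<rho> \<cdot> \<pi>)"
    unfolding rel_cylinder_def hom_def using PQ \<kappa>\<pi> mor \<rho> \<epsilon> P by auto
  moreover have "PM Z (\<kappa> \<cdot> P) (PM Z \<pi> h) = PM Z (\<epsilon> \<cdot> P) h"
    "PM Z (\<kappa> \<cdot> Q) (PM Z \<pi> h) = PM Z (\<epsilon> \<cdot> Q) h"
    using Z mor \<kappa>\<pi>(3-5) \<epsilon> P h by (simp_all flip: \<pi>\<kappa>)
  moreover have "PM Z \<pi> h \<in> PS Z (Cod C \<kappa>)" using Z mor \<kappa>\<pi> h by simp
  ultimately show ?thesis unfolding rel_homotopic_def by blast
qed

lemma rel_homotopic_trans:
  assumes Z: "is_presheaf C Z" and i: "i \<in> Cof C"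
    and "rel_homotopic Z i y x" "rel_homotopic Z i x w"
  shows "rel_homotopic Z i y w"
proof -
  obtain P\<^sub>2 Q\<^sub>2 j\<^sub>2 r\<^sub>2 H\<^sub>2 where cyl\<^sub>2: "rel_cylinder C i P\<^sub>2 Q\<^sub>2 j\<^sub>2 r\<^sub>2" and H\<^sub>2: "H\<^sub>2 \<in> PS Z (Cod C j\<^sub>2)"
    "PM Z (j\<^sub>2 \<cdot> P\<^sub>2) H\<^sub>2 = y" "PM Z (j\<^sub>2 \<cdot> Q\<^sub>2) H\<^sub>2 = x"
    using assms(3) unfolding rel_homotopic_def by blast
  obtain P\<^sub>1 Q\<^sub>1 j\<^sub>1 r\<^sub>1 H\<^sub>1 where cyl\<^sub>1: "rel_cylinder C i P\<^sub>1 Q\<^sub>1 j\<^sub>1 r\<^sub>1" and H\<^sub>1: "H\<^sub>1 \<in> PS Z (Cod C j\<^sub>1)"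
    "PM Z (j\<^sub>1 \<cdot> P\<^sub>1) H\<^sub>1 = x" "PM Z (j\<^sub>1 \<cdot> Q\<^sub>1) H\<^sub>1 = w"
    using assms(4) unfolding rel_homotopic_def by blast
  note R\<^sub>1 = rel_cylinderD[OF cyl\<^sub>1] and R\<^sub>2 = rel_cylinderD[OF cyl\<^sub>2]
  note P\<^sub>1 = pushoutD[OF R\<^sub>1(1)] and P\<^sub>2 = pushoutD[OF R\<^sub>2(1)]
  note mor = R\<^sub>1(4-8) R\<^sub>2(4-8) P\<^sub>1(1-8) P\<^sub>2(1-8)
  have c: "j\<^sub>1 \<cdot> P\<^sub>1 \<in> Cof C" "j\<^sub>1 \<cdot> P\<^sub>1 \<in> WE C"
    using rel_cylinder_ends[OF i cyl\<^sub>1] cylinder_data_WE unfolding cylinder_data_def by blast+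
  obtain \<alpha> \<beta> where ab: "is_pushout C (j\<^sub>1 \<cdot> P\<^sub>1) (j\<^sub>2 \<cdot> Q\<^sub>2) \<alpha> \<beta>"
    using pushout_exists[OF c(1), of "j\<^sub>2 \<cdot> Q\<^sub>2"] mor by auto
  note abp = pushoutD[OF ab]
  have "PM Z (j\<^sub>1 \<cdot> P\<^sub>1) H\<^sub>1 = PM Z (j\<^sub>2 \<cdot> Q\<^sub>2) H\<^sub>2" using H\<^sub>1 H\<^sub>2 by simp
  then obtain h where h: "h \<in> PS Z (Cod C \<alpha>)" "PM Z \<alpha> h = H\<^sub>1" "PM Z \<beta> h = H\<^sub>2"
    using presheaf_pushout_glue[OF Z ab c(1), of H\<^sub>1 H\<^sub>2] H\<^sub>1(1) H\<^sub>2(1) mor by auto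
  obtain \<rho> where \<rho>: "\<rho> \<in> WE C" "Dom C \<rho> = Cod C \<alpha>" "Cod C \<rho> = Cod C i" "\<rho> \<cdot> \<alpha> = r\<^sub>1" "\<rho> \<cdot> \<beta> = r\<^sub>2"
    using pushout_induced_WE[OF ab c, of r\<^sub>1 r\<^sub>2] R\<^sub>1(3,9) R\<^sub>2(3,10) mor by auto
  have "(\<beta> \<cdot> (j\<^sub>2 \<cdot> P\<^sub>2)) \<cdot> i = (\<alpha> \<cdot> (j\<^sub>1 \<cdot> Q\<^sub>1)) \<cdot> i"
  proof -
    have "(\<beta> \<cdot> (j\<^sub>2 \<cdot> P\<^sub>2)) \<cdot> i = \<beta> \<cdot> ((j\<^sub>2 \<cdot> Q\<^sub>2) \<cdot> i)" using mor abp P\<^sub>2(9) by simp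
    also have "\<dots> = \<alpha> \<cdot> ((j\<^sub>1 \<cdot> P\<^sub>1) \<cdot> i)"
      by (rule comp_eq_whisker[OF abp(9)[symmetric]]) (use mor abp in auto)
    also have "\<dots> = (\<alpha> \<cdot> (j\<^sub>1 \<cdot> Q\<^sub>1)) \<cdot> i" using mor abp P\<^sub>1(9) by simp
    finally show ?thesis .
  qed
  then obtain \<epsilon> where \<epsilon>: "\<epsilon> \<in> Mor C" "Dom C \<epsilon> = Cod C P\<^sub>2" "Cod C \<epsilon> = Cod C \<alpha>"
    "\<epsilon> \<cdot> P\<^sub>2 = \<beta> \<cdot> (j\<^sub>2 \<cdot> P\<^sub>2)" "\<epsilon> \<cdot> Q\<^sub>2 = \<alpha> \<cdot> (j\<^sub>1 \<cdot> Q\<^sub>1)"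
    using pushout_induced[OF R\<^sub>2(1), of "\<beta> \<cdot> (j\<^sub>2 \<cdot> P\<^sub>2)" "\<alpha> \<cdot> (j\<^sub>1 \<cdot> Q\<^sub>1)"] mor abp by auto
  have "\<rho> \<cdot> (\<epsilon> \<cdot> P\<^sub>2) = (\<rho> \<cdot> \<beta>) \<cdot> (j\<^sub>2 \<cdot> P\<^sub>2)" "\<rho> \<cdot> (\<epsilon> \<cdot> Q\<^sub>2) = (\<rho> \<cdot> \<alpha>) \<cdot> (j\<^sub>1 \<cdot> Q\<^sub>1)"
    using \<epsilon>(4,5) mor abp \<rho>(1,2) by simp_all
  then have "\<rho> \<cdot> (\<epsilon> \<cdot> P\<^sub>2) = Id C (Cod C i)" "\<rho> \<cdot> (\<epsilon> \<cdot> Q\<^sub>2) = Id C (Cod C i)"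
    using \<rho>(4,5) R\<^sub>1(10) R\<^sub>2(9) by simp_all
  then have "rel_homotopic Z i (PM Z (\<epsilon> \<cdot> P\<^sub>2) h) (PM Z (\<epsilon> \<cdot> Q\<^sub>2) h)"
    using rel_homotopicI_weak_cylinder[OF Z R\<^sub>2(1) \<epsilon>(1,2) \<rho>(1)] \<rho>(2,3) \<epsilon>(3) h(1) by simp
  moreover have "PM Z (\<epsilon> \<cdot> P\<^sub>2) h = y" "PM Z (\<epsilon> \<cdot> Q\<^sub>2) h = w"
    using \<epsilon> Z mor abp h H\<^sub>1 H\<^sub>2 by simp_all
  ultimately show ?thesis by simp
qed

lemma rel_homotopic_map:
  assumes Y: "is_presheaf C Y" and g: "presheaf_mor C Y Z g" and "rel_homotopic Y i y w"
  shows "rel_homotopic Z i (g (Cod C i) y) (g (Cod C i) w)"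
proof -
  obtain p q j r h where cyl: "rel_cylinder C i p q j r" and h: "h \<in> PS Y (Cod C j)"
    "PM Y (j \<cdot> p) h = y" "PM Y (j \<cdot> q) h = w"
    using assms(3) unfolding rel_homotopic_def by blast
  note R = rel_cylinderD[OF cyl] and P = pushoutD[OF R(1)]
  have "PM Z (j \<cdot> p) (g (Cod C j) h) = g (Cod C i) y" "PM Z (j \<cdot> q) (g (Cod C j) h) = g (Cod C i) w"
    using presheaf_mor_natural[OF g, of "j \<cdot> p" h] presheaf_mor_natural[OF g, of "j \<cdot> q" h] R P h
    by simp_all
  moreover have "g (Cod C j) h \<in> PS Z (Cod C j)" using g h R by simp
  ultimately show ?thesis using cyl unfolding rel_homotopic_def by blast
qed

lemma ps_weq_reflects_rel_homotopic:
  assumes Y: "is_presheaf C Y" and Z: "is_presheaf C Z" and g: "presheaf_mor C Y Z g"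
    and wg: "ps_weq C Y Z g" and i: "i \<in> Cof C"
    and yw: "y \<in> PS Y (Cod C i)" "w \<in> PS Y (Cod C i)" "PM Y i y = PM Y i w"
    and "rel_homotopic Z i (g (Cod C i) y) (g (Cod C i) w)"
  shows "rel_homotopic Y i y w"
proof -
  obtain P Q j r h where cyl: "rel_cylinder C i P Q j r" and h: "h \<in> PS Z (Cod C j)"
    "PM Z (j \<cdot> P) h = g (Cod C i) y" "PM Z (j \<cdot> Q) h = g (Cod C i) w"
    using assms(9) unfolding rel_homotopic_def by blast
  note R = rel_cylinderD[OF cyl] and PQ = pushoutD[OF R(1)]
  obtain v where v: "v \<in> PS Y (Cod C P)" "PM Y P v = y" "PM Y Q v = w"
    using presheaf_pushout_glue[OF Y R(1) i yw] by blast
  have "g (Dom C j) v = PM Z j h"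
  proof (rule presheaf_pushout_eqI[OF Z R(1) i])
    show "PM Z P (g (Dom C j) v) = PM Z P (PM Z j h)" "PM Z Q (g (Dom C j) v) = PM Z Q (PM Z j h)"
      using presheaf_mor_natural[OF g, of P v] presheaf_mor_natural[OF g, of Q v] v h Z R PQ
      by simp_all
  qed (use g v h Z R PQ in simp_all)
  then obtain K where K: "K \<in> PS Y (Cod C j)" "PM Y j K = v"
    using ps_weqE[OF wg R(2), of v h] v h R by auto
  have "PM Y (j \<cdot> P) K = y" "PM Y (j \<cdot> Q) K = w"
    using Y K v R PQ by simp_all
  then show ?thesis using cyl K(1) unfolding rel_homotopic_def by blast
qed

section \<open>Mapping cylinders\<close>

text \<open>For a cofibration \<open>i : A \<rightarrow> B\<close> and a cylinder \<open>(e, e', r)\<close> on \<open>A\<close>: \<open>l, k\<close> are the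
  coprojections of \<open>B \<squnion>\<^sub>A I\<close> (glued along the end \<open>e\<close>), \<open>s\<close> embeds it into \<open>M\<close>, the other end
  \<open>t : B \<rightarrow> M\<close> is attached along \<open>e'\<close>, and \<open>\<pi> : M \<rightarrow> B\<close> collapses \<open>I\<close> via \<open>i \<circ> r\<close>.\<close>
definition mapping_cylinder :: "'m \<Rightarrow> 'm \<Rightarrow> 'm \<Rightarrow> 'm \<Rightarrow> 'm \<Rightarrow> 'm \<Rightarrow> 'm \<Rightarrow> 'm \<Rightarrow> 'm \<Rightarrow> bool" where
  "mapping_cylinder i e e' r l k s t \<pi> \<longleftrightarrow>
     cylinder_data e e' r \<and> is_pushout C i e l k \<and>
     s \<in> Cof C \<and> s \<in> WE C \<and> Dom C s = Cod C l \<and>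
     t \<in> Cof C \<and> t \<in> WE C \<and> Dom C t = Cod C i \<and> Cod C t = Cod C s \<and> t \<cdot> i = s \<cdot> (k \<cdot> e') \<and>
     \<pi> \<in> Mor C \<and> Dom C \<pi> = Cod C s \<and> Cod C \<pi> = Cod C i \<and>
     \<pi> \<cdot> t = Id C (Cod C i) \<and> \<pi> \<cdot> (s \<cdot> l) = Id C (Cod C i) \<and> \<pi> \<cdot> (s \<cdot> k) = i \<cdot> r"

lemma mapping_cylinder_exists:
  assumes i: "i \<in> Cof C" and e: "cylinder_data e e' r" "Dom C e = Dom C i"
  obtains l k s t \<pi> where "mapping_cylinder i e e' r l k s t \<pi>"
proof -
  have e': "e \<in> Cof C" "e' \<in> Cof C" "Dom C e' = Dom C i" "Cod C e' = Cod C e" "e \<in> WE C"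
    "r \<in> Mor C" "Dom C r = Cod C e" "Cod C r = Dom C i"
    "r \<cdot> e = Id C (Dom C i)" "r \<cdot> e' = Id C (Dom C i)"
    using e cylinder_data_WE unfolding cylinder_data_def by auto
  have im: "i \<in> Mor C" "e \<in> Mor C" "e' \<in> Mor C" using i e' by auto
  obtain l k where N: "is_pushout C i e l k" using pushout_exists[OF i im(2) e(2)] by blast
  note Np = pushoutD[OF N]
  have k_Cof: "k \<in> Cof C" using pushout_Cof[OF i N] .
  have l_WE: "l \<in> WE C" using pushout_WE_sym[OF e'(1,5) N] .
  have ke': "k \<cdot> e' \<in> Cof C" "k \<cdot> e' \<in> Mor C" "Dom C (k \<cdot> e') = Dom C i"
    using k_Cof e' Np by auto
  obtain l\<^sub>2 k\<^sub>2 where N\<^sub>2: "is_pushout C i (k \<cdot> e') l\<^sub>2 k\<^sub>2"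
    using pushout_exists[OF i ke'(2,3)] by blast
  note N\<^sub>2p = pushoutD[OF N\<^sub>2]
  have "(i \<cdot> r) \<cdot> e = Id C (Cod C i) \<cdot> i" using im e' by simp
  then obtain \<psi> where \<psi>: "\<psi> \<in> Mor C" "Dom C \<psi> = Cod C l" "Cod C \<psi> = Cod C i"
    "\<psi> \<cdot> l = Id C (Cod C i)" "\<psi> \<cdot> k = i \<cdot> r"
    using pushout_induced[OF N, of "Id C (Cod C i)" "i \<cdot> r"] im e' by auto
  have "\<psi> \<cdot> (k \<cdot> e') = (\<psi> \<cdot> k) \<cdot> e'" using \<psi>(1-3) Np im e' by simp
  also have "\<dots> = i \<cdot> (r \<cdot> e')" using im e' by (simp add: \<psi>(5))
  finally have "Id C (Cod C i) \<cdot> i = \<psi> \<cdot> (k \<cdot> e')" using im e' by simp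
  moreover have "Dom C \<psi> = Cod C (k \<cdot> e')" using \<psi>(2) Np im e' by simp
  ultimately obtain \<pi>\<^sub>2 where \<pi>\<^sub>2: "\<pi>\<^sub>2 \<in> Mor C" "Dom C \<pi>\<^sub>2 = Cod C l\<^sub>2"
    "Cod C \<pi>\<^sub>2 = Cod C (Id C (Cod C i))" "\<pi>\<^sub>2 \<cdot> l\<^sub>2 = Id C (Cod C i)" "\<pi>\<^sub>2 \<cdot> k\<^sub>2 = \<psi>"
    using pushout_induced[OF N\<^sub>2 Id_in_Mor \<psi>(1) Dom_Id] im \<psi>(3) by auto
  obtain \<kappa> \<pi> where \<kappa>\<pi>: "\<kappa> \<in> Cof C" "\<pi> \<in> WE C" "Dom C \<kappa> = Dom C \<pi>\<^sub>2" "Dom C \<pi> = Cod C \<kappa>"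
    "Cod C \<pi> = Cod C \<pi>\<^sub>2" "\<pi> \<cdot> \<kappa> = \<pi>\<^sub>2"
    using factorization[OF \<pi>\<^sub>2(1)] by blast
  note mor = \<kappa>\<pi>(3-5)[unfolded \<pi>\<^sub>2(2,3) Cod_Id[OF Cod_in_Obj[OF im(1)]]] \<pi>\<^sub>2(1,2) N\<^sub>2p(1-8) Np(1-8) \<psi>(1-3) im e' ke'
  have \<pi>_k\<^sub>2: "\<pi> \<cdot> (\<kappa> \<cdot> k\<^sub>2) = \<psi>" and \<pi>_l\<^sub>2: "\<pi> \<cdot> (\<kappa> \<cdot> l\<^sub>2) = Id C (Cod C i)"
    using mor \<kappa>\<pi>(1,2) \<pi>\<^sub>2(4,5) by (simp_all flip: \<kappa>\<pi>(6))
  have \<psi>_WE: "\<psi> \<in> WE C" using retraction_in_WE[OF l_WE \<psi>(1)] \<psi> Np by simp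
  have "\<kappa> \<cdot> k\<^sub>2 \<in> WE C"
    using WE_cancel_left[OF _ \<kappa>\<pi>(2)] \<pi>_k\<^sub>2 \<psi>_WE mor \<kappa>\<pi>(1) by simp
  moreover have "\<kappa> \<cdot> l\<^sub>2 \<in> WE C"
    using section_in_WE[OF _ \<kappa>\<pi>(2)] \<pi>_l\<^sub>2 mor \<kappa>\<pi>(1) by simp
  moreover have "\<kappa> \<cdot> k\<^sub>2 \<in> Cof C" "\<kappa> \<cdot> l\<^sub>2 \<in> Cof C"
    using pushout_Cof[OF i N\<^sub>2] pushout_Cof_sym[OF ke'(1) N\<^sub>2] \<kappa>\<pi>(1) mor by simp_all
  moreover have "(\<kappa> \<cdot> l\<^sub>2) \<cdot> i = (\<kappa> \<cdot> k\<^sub>2) \<cdot> (k \<cdot> e')"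
    using mor \<kappa>\<pi>(1) N\<^sub>2p(9) by simp
  moreover have "\<pi> \<cdot> ((\<kappa> \<cdot> k\<^sub>2) \<cdot> l) = (\<pi> \<cdot> (\<kappa> \<cdot> k\<^sub>2)) \<cdot> l"
    "\<pi> \<cdot> ((\<kappa> \<cdot> k\<^sub>2) \<cdot> k) = (\<pi> \<cdot> (\<kappa> \<cdot> k\<^sub>2)) \<cdot> k"
    using mor \<kappa>\<pi>(1,2) by simp_all
  then have "\<pi> \<cdot> ((\<kappa> \<cdot> k\<^sub>2) \<cdot> l) = Id C (Cod C i)" "\<pi> \<cdot> ((\<kappa> \<cdot> k\<^sub>2) \<cdot> k) = i \<cdot> r"
    using \<pi>_k\<^sub>2 \<psi>(4,5) by simp_all
  ultimately have "mapping_cylinder i e e' r l k (\<kappa> \<cdot> k\<^sub>2) (\<kappa> \<cdot> l\<^sub>2) \<pi>"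
    unfolding mapping_cylinder_def using e(1) N \<pi>_l\<^sub>2 mor \<kappa>\<pi>(1,2) by simp
  then show ?thesis using that by blast
qed

lemma mapping_cylinderD:
  assumes "mapping_cylinder i e e' r l k s t \<pi>"
  shows "cylinder_data e e' r" "is_pushout C i e l k" "s \<in> Cof C" "s \<in> WE C" "Dom C s = Cod C l"
    "t \<in> Cof C" "t \<in> WE C" "Dom C t = Cod C i" "Cod C t = Cod C s" "t \<cdot> i = s \<cdot> (k \<cdot> e')"
    "\<pi> \<in> Mor C" "Dom C \<pi> = Cod C s" "Cod C \<pi> = Cod C i"
    "\<pi> \<cdot> t = Id C (Cod C i)" "\<pi> \<cdot> (s \<cdot> l) = Id C (Cod C i)" "\<pi> \<cdot> (s \<cdot> k) = i \<cdot> r"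
  using assms unfolding mapping_cylinder_def by simp_all

lemma mapping_cylinder_homotopy_extension:
  assumes Z: "is_presheaf C Z" and M: "mapping_cylinder i e e' r l k s t \<pi>" and i: "i \<in> Cof C"
    and z: "z \<in> PS Z (Cod C i)" and G: "G \<in> PS Z (Cod C e)" "PM Z i z = PM Z e G"
  obtains m where "m \<in> PS Z (Cod C s)" "PM Z (s \<cdot> l) m = z" "PM Z (s \<cdot> k) m = G"
    "PM Z i (PM Z t m) = PM Z e' G"
proof -
  note M' = mapping_cylinderD[OF M]
  note P = pushoutD[OF M'(2)]
  have e': "e' \<in> Mor C" "Dom C e' = Dom C i" "Cod C e' = Cod C e"
    using M'(1) P unfolding cylinder_data_def by auto
  obtain n where n: "n \<in> PS Z (Cod C l)" "PM Z l n = z" "PM Z k n = G"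
    using presheaf_pushout_glue[OF Z M'(2) i z] G P by auto
  obtain m where m: "m \<in> PS Z (Cod C s)" "PM Z s m = n"
    using presheaf_extend_trivial_Cof[OF Z M'(3,4)] n M'(5) by auto
  have "PM Z i (PM Z t m) = PM Z (s \<cdot> (k \<cdot> e')) m"
    using Z M' m P by (simp flip: M'(10))
  also have "\<dots> = PM Z e' G"
    using Z M'(3,5) m n P e' by simp
  finally show ?thesis
    using that m n Z M'(3,5) P by simp
qed

text \<open>Gluing \<open>M\<^sub>0\<close> and \<open>M\<^sub>1\<close> along their common copy of the cylinder, with the relative
  cylinder inserted between the end \<open>s\<^sub>0 \<circ> l\<^sub>0\<close> of \<open>M\<^sub>0\<close> and the end \<open>t\<^sub>1\<close> of \<open>M\<^sub>1\<close>, gives a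
  weak cylinder from the end \<open>t\<^sub>0\<close> to the end \<open>s\<^sub>1 \<circ> l\<^sub>1\<close>.\<close>
lemma mapping_cylinders_box:
  assumes i: "i \<in> Cof C"
    and M\<^sub>0: "mapping_cylinder i e e' r l\<^sub>0 k\<^sub>0 s\<^sub>0 t\<^sub>0 \<pi>\<^sub>0"
    and M\<^sub>1: "mapping_cylinder i e' e r l\<^sub>1 k\<^sub>1 s\<^sub>1 t\<^sub>1 \<pi>\<^sub>1"
    and cyl: "rel_cylinder C i P Q j r'"
    and E: "is_pushout C t\<^sub>1 (j \<cdot> Q) \<beta>\<^sub>1 \<alpha>\<^sub>1"
    and \<nu>: "\<nu> \<in> Mor C" "Dom C \<nu> = Cod C l\<^sub>0" "Cod C \<nu> = Cod C \<beta>\<^sub>1"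
      "\<nu> \<cdot> l\<^sub>0 = \<alpha>\<^sub>1 \<cdot> (j \<cdot> P)" "\<nu> \<cdot> k\<^sub>0 = \<beta>\<^sub>1 \<cdot> (s\<^sub>1 \<cdot> k\<^sub>1)"
    and B: "is_pushout C s\<^sub>0 \<nu> \<beta>\<^sub>0 \<gamma>"
  obtains \<epsilon> \<rho> where "\<epsilon> \<in> Mor C" "Dom C \<epsilon> = Cod C P" "Cod C \<epsilon> = Cod C \<beta>\<^sub>0"
    "\<epsilon> \<cdot> P = \<beta>\<^sub>0 \<cdot> t\<^sub>0" "\<epsilon> \<cdot> Q = \<gamma> \<cdot> (\<beta>\<^sub>1 \<cdot> (s\<^sub>1 \<cdot> l\<^sub>1))"
    "\<rho> \<in> WE C" "Dom C \<rho> = Cod C \<beta>\<^sub>0" "Cod C \<rho> = Cod C i"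
    "\<rho> \<cdot> (\<epsilon> \<cdot> P) = Id C (Cod C i)" "\<rho> \<cdot> (\<epsilon> \<cdot> Q) = Id C (Cod C i)"
proof -
  note M\<^sub>0' = mapping_cylinderD[OF M\<^sub>0] and M\<^sub>1' = mapping_cylinderD[OF M\<^sub>1]
  note N\<^sub>0 = pushoutD[OF M\<^sub>0'(2)] and N\<^sub>1 = pushoutD[OF M\<^sub>1'(2)]
  note R = rel_cylinderD[OF cyl] and PQ = pushoutD[OF R(1)]
  note Ep = pushoutD[OF E] and Bp = pushoutD[OF B]
  have e: "e \<in> Mor C" "e' \<in> Mor C" "Dom C e' = Dom C i" "Cod C e' = Cod C e"
    using M\<^sub>0'(1) N\<^sub>0 unfolding cylinder_data_def by auto
  note mor = M\<^sub>0'(3,5,6,8,9,11-13) M\<^sub>1'(3,5,6,8,9,11-13) N\<^sub>0(1-8) N\<^sub>1(1-8) R(4-8) PQ(1-8)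
    Ep(1-8) Bp(1-8) \<nu>(1-3) e
  obtain \<rho>\<^sub>E where \<rho>\<^sub>E: "\<rho>\<^sub>E \<in> WE C" "Dom C \<rho>\<^sub>E = Cod C \<beta>\<^sub>1" "Cod C \<rho>\<^sub>E = Cod C i"
    "\<rho>\<^sub>E \<cdot> \<beta>\<^sub>1 = \<pi>\<^sub>1" "\<rho>\<^sub>E \<cdot> \<alpha>\<^sub>1 = r'"
    using pushout_induced_WE[OF E M\<^sub>1'(6,7), of \<pi>\<^sub>1 r'] M\<^sub>1'(14) R(3,10) mor by auto
  have "\<pi>\<^sub>0 \<cdot> s\<^sub>0 = \<rho>\<^sub>E \<cdot> \<nu>"
  proof (rule pushout_map_eqI[OF M\<^sub>0'(2)])
    have "(\<pi>\<^sub>0 \<cdot> s\<^sub>0) \<cdot> l\<^sub>0 = r' \<cdot> (j \<cdot> P)" using mor M\<^sub>0'(15) R(9) by simp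
    also have "\<dots> = (\<rho>\<^sub>E \<cdot> \<nu>) \<cdot> l\<^sub>0" using mor \<rho>\<^sub>E(1-3) by (simp add: \<nu>(4) flip: \<rho>\<^sub>E(5))
    finally show "(\<pi>\<^sub>0 \<cdot> s\<^sub>0) \<cdot> l\<^sub>0 = (\<rho>\<^sub>E \<cdot> \<nu>) \<cdot> l\<^sub>0" .
    have "(\<pi>\<^sub>0 \<cdot> s\<^sub>0) \<cdot> k\<^sub>0 = \<pi>\<^sub>1 \<cdot> (s\<^sub>1 \<cdot> k\<^sub>1)" using mor M\<^sub>0'(16) M\<^sub>1'(16) by simp
    also have "\<dots> = (\<rho>\<^sub>E \<cdot> \<nu>) \<cdot> k\<^sub>0" using mor \<rho>\<^sub>E(1-3) by (simp add: \<nu>(5) flip: \<rho>\<^sub>E(4))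
    finally show "(\<pi>\<^sub>0 \<cdot> s\<^sub>0) \<cdot> k\<^sub>0 = (\<rho>\<^sub>E \<cdot> \<nu>) \<cdot> k\<^sub>0" .
  qed (use mor \<rho>\<^sub>E in auto)
  then obtain \<rho> where \<rho>: "\<rho> \<in> WE C" "Dom C \<rho> = Cod C \<beta>\<^sub>0" "Cod C \<rho> = Cod C i"
    "\<rho> \<cdot> \<beta>\<^sub>0 = \<pi>\<^sub>0" "\<rho> \<cdot> \<gamma> = \<rho>\<^sub>E"
    using pushout_induced_WE[OF B M\<^sub>0'(3,4), of \<pi>\<^sub>0 \<rho>\<^sub>E] \<rho>\<^sub>E mor by auto
  have "(\<beta>\<^sub>0 \<cdot> t\<^sub>0) \<cdot> i = \<beta>\<^sub>0 \<cdot> (s\<^sub>0 \<cdot> (k\<^sub>0 \<cdot> e'))" using mor by (simp add: M\<^sub>0'(10))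
  also have "\<dots> = \<gamma> \<cdot> ((\<nu> \<cdot> k\<^sub>0) \<cdot> e')"
    using comp_eq_whisker[OF Bp(9), of "k\<^sub>0 \<cdot> e'"] mor by simp
  also have "\<dots> = (\<gamma> \<cdot> (\<beta>\<^sub>1 \<cdot> (s\<^sub>1 \<cdot> l\<^sub>1))) \<cdot> i" using mor by (simp add: \<nu>(5) N\<^sub>1(9))
  finally obtain \<epsilon> where \<epsilon>: "\<epsilon> \<in> Mor C" "Dom C \<epsilon> = Cod C P" "Cod C \<epsilon> = Cod C \<beta>\<^sub>0"
    "\<epsilon> \<cdot> P = \<beta>\<^sub>0 \<cdot> t\<^sub>0" "\<epsilon> \<cdot> Q = \<gamma> \<cdot> (\<beta>\<^sub>1 \<cdot> (s\<^sub>1 \<cdot> l\<^sub>1))"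
    using pushout_induced[OF R(1), of "\<beta>\<^sub>0 \<cdot> t\<^sub>0" "\<gamma> \<cdot> (\<beta>\<^sub>1 \<cdot> (s\<^sub>1 \<cdot> l\<^sub>1))"] mor by auto
  have "\<rho> \<cdot> (\<epsilon> \<cdot> P) = (\<rho> \<cdot> \<beta>\<^sub>0) \<cdot> t\<^sub>0" "\<rho> \<cdot> (\<epsilon> \<cdot> Q) = ((\<rho> \<cdot> \<gamma>) \<cdot> \<beta>\<^sub>1) \<cdot> (s\<^sub>1 \<cdot> l\<^sub>1)"
    using mor \<rho>(1,2) by (simp_all add: \<epsilon>(4,5))
  then have "\<rho> \<cdot> (\<epsilon> \<cdot> P) = Id C (Cod C i)" "\<rho> \<cdot> (\<epsilon> \<cdot> Q) = Id C (Cod C i)"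
    using \<rho>(4,5) \<rho>\<^sub>E(4) M\<^sub>0'(14) M\<^sub>1'(15) by simp_all
  then show ?thesis using that \<epsilon> \<rho>(1-3) by blast
qed

lemma rel_homotopic_through_mapping_cylinders:
  assumes Z: "is_presheaf C Z" and i: "i \<in> Cof C"
    and M\<^sub>0: "mapping_cylinder i e e' r l\<^sub>0 k\<^sub>0 s\<^sub>0 t\<^sub>0 \<pi>\<^sub>0"
    and M\<^sub>1: "mapping_cylinder i e' e r l\<^sub>1 k\<^sub>1 s\<^sub>1 t\<^sub>1 \<pi>\<^sub>1"
    and m: "m\<^sub>0 \<in> PS Z (Cod C s\<^sub>0)" "m\<^sub>1 \<in> PS Z (Cod C s\<^sub>1)" "PM Z (s\<^sub>0 \<cdot> k\<^sub>0) m\<^sub>0 = PM Z (s\<^sub>1 \<cdot> k\<^sub>1) m\<^sub>1"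
    and htpy: "rel_homotopic Z i (PM Z (s\<^sub>0 \<cdot> l\<^sub>0) m\<^sub>0) (PM Z t\<^sub>1 m\<^sub>1)"
  shows "rel_homotopic Z i (PM Z t\<^sub>0 m\<^sub>0) (PM Z (s\<^sub>1 \<cdot> l\<^sub>1) m\<^sub>1)"
proof -
  obtain P Q j r' K where cyl: "rel_cylinder C i P Q j r'" and K: "K \<in> PS Z (Cod C j)"
    "PM Z (j \<cdot> P) K = PM Z (s\<^sub>0 \<cdot> l\<^sub>0) m\<^sub>0" "PM Z (j \<cdot> Q) K = PM Z t\<^sub>1 m\<^sub>1"
    using htpy unfolding rel_homotopic_def by blast
  note M\<^sub>0' = mapping_cylinderD[OF M\<^sub>0] and M\<^sub>1' = mapping_cylinderD[OF M\<^sub>1]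
  note N\<^sub>0 = pushoutD[OF M\<^sub>0'(2)] and N\<^sub>1 = pushoutD[OF M\<^sub>1'(2)]
  note R = rel_cylinderD[OF cyl] and PQ = pushoutD[OF R(1)]
  have e: "e \<in> Mor C" "e' \<in> Mor C" "Dom C e' = Dom C i" "Cod C e' = Cod C e"
    using M\<^sub>0'(1) N\<^sub>0 unfolding cylinder_data_def by auto
  note mor = M\<^sub>0'(3,5,6,8,9,11-13) M\<^sub>1'(3,5,6,8,9,11-13) N\<^sub>0(1-8) N\<^sub>1(1-8) R(4-8) PQ(1-8) e
  obtain \<beta>\<^sub>1 \<alpha>\<^sub>1 where E: "is_pushout C t\<^sub>1 (j \<cdot> Q) \<beta>\<^sub>1 \<alpha>\<^sub>1"
    using pushout_exists[OF M\<^sub>1'(6), of "j \<cdot> Q"] mor by auto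
  note Ep = pushoutD[OF E]
  obtain e\<^sub>1 where e\<^sub>1: "e\<^sub>1 \<in> PS Z (Cod C \<beta>\<^sub>1)" "PM Z \<beta>\<^sub>1 e\<^sub>1 = m\<^sub>1" "PM Z \<alpha>\<^sub>1 e\<^sub>1 = K"
    using presheaf_pushout_glue[OF Z E M\<^sub>1'(6), of m\<^sub>1 K] m K mor by auto
  have "(\<alpha>\<^sub>1 \<cdot> (j \<cdot> P)) \<cdot> i = \<alpha>\<^sub>1 \<cdot> ((j \<cdot> Q) \<cdot> i)" using mor Ep PQ(9) by simp
  also have "\<dots> = \<beta>\<^sub>1 \<cdot> (t\<^sub>1 \<cdot> i)"
    by (rule comp_eq_whisker[OF Ep(9)[symmetric]]) (use mor Ep(1-8) in auto)
  also have "\<dots> = (\<beta>\<^sub>1 \<cdot> (s\<^sub>1 \<cdot> k\<^sub>1)) \<cdot> e" using mor Ep(1-8) by (simp add: M\<^sub>1'(10))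
  finally obtain \<nu> where \<nu>: "\<nu> \<in> Mor C" "Dom C \<nu> = Cod C l\<^sub>0" "Cod C \<nu> = Cod C \<beta>\<^sub>1"
    "\<nu> \<cdot> l\<^sub>0 = \<alpha>\<^sub>1 \<cdot> (j \<cdot> P)" "\<nu> \<cdot> k\<^sub>0 = \<beta>\<^sub>1 \<cdot> (s\<^sub>1 \<cdot> k\<^sub>1)"
    using pushout_induced[OF M\<^sub>0'(2), of "\<alpha>\<^sub>1 \<cdot> (j \<cdot> P)" "\<beta>\<^sub>1 \<cdot> (s\<^sub>1 \<cdot> k\<^sub>1)"] mor Ep(1-8)
    by auto
  obtain \<beta>\<^sub>0 \<gamma> where B: "is_pushout C s\<^sub>0 \<nu> \<beta>\<^sub>0 \<gamma>"
    using pushout_exists[OF M\<^sub>0'(3) \<nu>(1)] \<nu>(2) M\<^sub>0'(5) by auto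
  note Bp = pushoutD[OF B]
  have "PM Z s\<^sub>0 m\<^sub>0 = PM Z \<nu> e\<^sub>1"
  proof (rule presheaf_pushout_eqI[OF Z M\<^sub>0'(2) i])
    have "PM Z l\<^sub>0 (PM Z s\<^sub>0 m\<^sub>0) = PM Z (\<alpha>\<^sub>1 \<cdot> (j \<cdot> P)) e\<^sub>1"
      using Z K e\<^sub>1 m mor Ep(1-8) by simp
    then show "PM Z l\<^sub>0 (PM Z s\<^sub>0 m\<^sub>0) = PM Z l\<^sub>0 (PM Z \<nu> e\<^sub>1)"
      using Z e\<^sub>1 \<nu>(1-3) mor by (simp flip: \<nu>(4))
    have "PM Z k\<^sub>0 (PM Z s\<^sub>0 m\<^sub>0) = PM Z (\<beta>\<^sub>1 \<cdot> (s\<^sub>1 \<cdot> k\<^sub>1)) e\<^sub>1"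
      using Z e\<^sub>1 m mor Ep(1-8) by simp
    then show "PM Z k\<^sub>0 (PM Z s\<^sub>0 m\<^sub>0) = PM Z k\<^sub>0 (PM Z \<nu> e\<^sub>1)"
      using Z e\<^sub>1 \<nu>(1-3) mor by (simp flip: \<nu>(5))
  qed (use Z m e\<^sub>1 \<nu> mor in simp_all)
  then obtain h where h: "h \<in> PS Z (Cod C \<beta>\<^sub>0)" "PM Z \<beta>\<^sub>0 h = m\<^sub>0" "PM Z \<gamma> h = e\<^sub>1"
    using presheaf_pushout_glue[OF Z B M\<^sub>0'(3), of m\<^sub>0 e\<^sub>1] m e\<^sub>1 \<nu> mor by auto
  obtain \<epsilon> \<rho> where \<epsilon>: "\<epsilon> \<in> Mor C" "Dom C \<epsilon> = Cod C P" "Cod C \<epsilon> = Cod C \<beta>\<^sub>0"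
    "\<epsilon> \<cdot> P = \<beta>\<^sub>0 \<cdot> t\<^sub>0" "\<epsilon> \<cdot> Q = \<gamma> \<cdot> (\<beta>\<^sub>1 \<cdot> (s\<^sub>1 \<cdot> l\<^sub>1))"
    and \<rho>: "\<rho> \<in> WE C" "Dom C \<rho> = Cod C \<beta>\<^sub>0" "Cod C \<rho> = Cod C i"
    "\<rho> \<cdot> (\<epsilon> \<cdot> P) = Id C (Cod C i)" "\<rho> \<cdot> (\<epsilon> \<cdot> Q) = Id C (Cod C i)"
    using mapping_cylinders_box[OF i M\<^sub>0 M\<^sub>1 cyl E \<nu> B] by blast
  have "rel_homotopic Z i (PM Z (\<epsilon> \<cdot> P) h) (PM Z (\<epsilon> \<cdot> Q) h)"
    using rel_homotopicI_weak_cylinder[OF Z R(1) \<epsilon>(1,2) \<rho>(1)] \<rho>(2-5) \<epsilon>(3) h(1) by simp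
  moreover have "PM Z (\<epsilon> \<cdot> P) h = PM Z t\<^sub>0 m\<^sub>0" "PM Z (\<epsilon> \<cdot> Q) h = PM Z (s\<^sub>1 \<cdot> l\<^sub>1) m\<^sub>1"
    using Z h e\<^sub>1 mor Ep(1-8) Bp(1-8) \<nu> by (simp_all add: \<epsilon>(4,5))
  ultimately show ?thesis by simp
qed

section \<open>Two out of three\<close>

lemma ps_weq_comp:
  assumes Y: "is_presheaf C Y" and Z: "is_presheaf C Z"
    and f: "presheaf_mor C X Y f" and g: "presheaf_mor C Y Z g"
    and wf: "ps_weq C X Y f" and wg: "ps_weq C Y Z g"
  shows "ps_weq C X Z (ps_comp g f)"
proof (rule ps_weqI)
  fix i u w assume i: "i \<in> Cof C" and u: "u \<in> PS X (Dom C i)" and w: "w \<in> PS Z (Cod C i)"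
    and "ps_comp g f (Dom C i) u = PM Z i w"
  then obtain b where b: "b \<in> PS Y (Cod C i)" "PM Y i b = f (Dom C i) u"
    and gb: "rel_homotopic Z i (g (Cod C i) b) w"
    using ps_weqE[OF wg i, of "f (Dom C i) u" w] f by (auto simp: ps_comp_def)
  obtain a where a: "a \<in> PS X (Cod C i)" "PM X i a = u"
    and fa: "rel_homotopic Y i (f (Cod C i) a) b"
    using ps_weqE[OF wf i u b(1)] b(2) by auto
  have "rel_homotopic Z i (ps_comp g f (Cod C i) a) w"
    using rel_homotopic_trans[OF Z i rel_homotopic_map[OF Y g fa] gb] by (simp add: ps_comp_def)
  then show "\<exists>a\<in>PS X (Cod C i). PM X i a = u \<and> rel_homotopic Z i (ps_comp g f (Cod C i) a) w"
    using a by blast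
qed

lemma ps_weq_cancel_left:
  assumes Y: "is_presheaf C Y" and Z: "is_presheaf C Z"
    and f: "presheaf_mor C X Y f" and g: "presheaf_mor C Y Z g"
    and wg: "ps_weq C Y Z g" and wgf: "ps_weq C X Z (ps_comp g f)"
  shows "ps_weq C X Y f"
proof (rule ps_weqI)
  fix i u w assume i: "i \<in> Cof C" and u: "u \<in> PS X (Dom C i)" and w: "w \<in> PS Y (Cod C i)"
    and e: "f (Dom C i) u = PM Y i w"
  have "ps_comp g f (Dom C i) u = PM Z i (g (Cod C i) w)"
    using e presheaf_mor_natural[OF g, of i w] i w by (simp add: ps_comp_def)
  then obtain a where a: "a \<in> PS X (Cod C i)" "PM X i a = u"
    and "rel_homotopic Z i (g (Cod C i) (f (Cod C i) a)) (g (Cod C i) w)"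
    using ps_weqE[OF wgf i u, of "g (Cod C i) w"] g w i by (auto simp: ps_comp_def)
  moreover have "PM Y i (f (Cod C i) a) = PM Y i w"
    using presheaf_mor_natural[OF f, of i a] a e i by simp
  ultimately have "rel_homotopic Y i (f (Cod C i) a) w"
    using ps_weq_reflects_rel_homotopic[OF Y Z g wg i _ w] f a i by simp
  then show "\<exists>a\<in>PS X (Cod C i). PM X i a = u \<and> rel_homotopic Y i (f (Cod C i) a) w"
    using a by blast
qed

lemma ps_weq_homotopic_preimage:
  assumes X: "is_presheaf C X" and Y: "is_presheaf C Y" and f: "presheaf_mor C X Y f"
    and wf: "ps_weq C X Y f" and a: "a \<in> Obj C" and u: "u \<in> PS Y a"
  obtains x where "x \<in> PS X a" "rel_homotopic Y (init_map a) (f a x) u"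
proof -
  obtain x\<^sub>0 where x\<^sub>0: "PS X init_obj = {x\<^sub>0}" using PS_init_obj_singleton[OF X] .
  obtain y\<^sub>0 where y\<^sub>0: "PS Y init_obj = {y\<^sub>0}" using PS_init_obj_singleton[OF Y] .
  have "f init_obj x\<^sub>0 \<in> PS Y init_obj" using f x\<^sub>0 by simp
  moreover have "PM Y (init_map a) u \<in> PS Y init_obj" using Y a u by simp
  ultimately have "f (Dom C (init_map a)) x\<^sub>0 = PM Y (init_map a) u" using y\<^sub>0 a by simp
  moreover have "x\<^sub>0 \<in> PS X (Dom C (init_map a))" "u \<in> PS Y (Cod C (init_map a))"
    using x\<^sub>0 a u by simp_all
  ultimately obtain x where "x \<in> PS X (Cod C (init_map a))"
    and "rel_homotopic Y (init_map a) (f (Cod C (init_map a)) x) u"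
    using ps_weqE[OF wf init_map_in_Cof[OF a]] by blast
  then show ?thesis using that a by simp
qed

lemma ps_weq_cancel_right:
  assumes X: "is_presheaf C X" and Y: "is_presheaf C Y" and Z: "is_presheaf C Z"
    and f: "presheaf_mor C X Y f" and g: "presheaf_mor C Y Z g"
    and wf: "ps_weq C X Y f" and wgf: "ps_weq C X Z (ps_comp g f)"
  shows "ps_weq C Y Z g"
proof (rule ps_weqI)
  fix i u w assume i: "i \<in> Cof C" and u: "u \<in> PS Y (Dom C i)" and w: "w \<in> PS Z (Cod C i)"
    and e: "g (Dom C i) u = PM Z i w"
  define A where "A = Dom C i"
  have A: "A \<in> Obj C" "init_map A \<in> Cof C" using i by (simp_all add: A_def)
  obtain x where x: "x \<in> PS X A" and "rel_homotopic Y (init_map A) (f A x) u"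
    using ps_weq_homotopic_preimage[OF X Y f wf A(1)] u unfolding A_def by blast
  then obtain P Q j r H where cyl: "rel_cylinder C (init_map A) P Q j r" and H: "H \<in> PS Y (Cod C j)"
    "PM Y (j \<cdot> P) H = f A x" "PM Y (j \<cdot> Q) H = u"
    unfolding rel_homotopic_def by blast
  note R = rel_cylinderD[OF cyl] and PQ = pushoutD[OF R(1)]
  have cd: "cylinder_data (j \<cdot> P) (j \<cdot> Q) r" using rel_cylinder_ends[OF A(2) cyl] .
  have jPQ: "j \<cdot> P \<in> Mor C" "j \<cdot> Q \<in> Mor C" "Dom C (j \<cdot> P) = A" "Dom C (j \<cdot> Q) = A"
    "Cod C (j \<cdot> P) = Cod C j" "Cod C (j \<cdot> Q) = Cod C j"
    using R PQ A by simp_all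
  obtain l\<^sub>0 k\<^sub>0 s\<^sub>0 t\<^sub>0 \<pi>\<^sub>0 where M\<^sub>0: "mapping_cylinder i (j \<cdot> P) (j \<cdot> Q) r l\<^sub>0 k\<^sub>0 s\<^sub>0 t\<^sub>0 \<pi>\<^sub>0"
    using mapping_cylinder_exists[OF i cd] jPQ(3) unfolding A_def by blast
  obtain l\<^sub>1 k\<^sub>1 s\<^sub>1 t\<^sub>1 \<pi>\<^sub>1 where M\<^sub>1: "mapping_cylinder i (j \<cdot> Q) (j \<cdot> P) r l\<^sub>1 k\<^sub>1 s\<^sub>1 t\<^sub>1 \<pi>\<^sub>1"
    using mapping_cylinder_exists[OF i cylinder_data_sym[OF cd]] jPQ(4) unfolding A_def by blast
  note M\<^sub>0' = mapping_cylinderD[OF M\<^sub>0] and M\<^sub>1' = mapping_cylinderD[OF M\<^sub>1]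
  note N\<^sub>0 = pushoutD[OF M\<^sub>0'(2)]
  \<comment> \<open>Transport \<open>w\<close> along \<open>g H\<close> to a solution of a lifting problem for \<open>g \<circ> f\<close>.\<close>
  have gH: "g (Cod C j) H \<in> PS Z (Cod C j)" using g H R by simp
  have "PM Z (j \<cdot> Q) (g (Cod C j) H) = PM Z i w"
    using presheaf_mor_natural[OF g jPQ(2), of H] H jPQ e by (simp add: A_def)
  then obtain m\<^sub>1 where m\<^sub>1: "m\<^sub>1 \<in> PS Z (Cod C s\<^sub>1)" "PM Z (s\<^sub>1 \<cdot> l\<^sub>1) m\<^sub>1 = w"
    "PM Z (s\<^sub>1 \<cdot> k\<^sub>1) m\<^sub>1 = g (Cod C j) H" "PM Z i (PM Z t\<^sub>1 m\<^sub>1) = PM Z (j \<cdot> P) (g (Cod C j) H)"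
    using mapping_cylinder_homotopy_extension[OF Z M\<^sub>1 i w, of "g (Cod C j) H"] gH jPQ by auto
  have "PM Z (j \<cdot> P) (g (Cod C j) H) = ps_comp g f (Dom C i) x"
    using presheaf_mor_natural[OF g jPQ(1), of H] H jPQ by (simp add: A_def ps_comp_def)
  then obtain a where a: "a \<in> PS X (Cod C i)" "PM X i a = x"
    and ga: "rel_homotopic Z i (ps_comp g f (Cod C i) a) (PM Z t\<^sub>1 m\<^sub>1)"
    using ps_weqE[OF wgf i, of x "PM Z t\<^sub>1 m\<^sub>1"] x m\<^sub>1 Z M\<^sub>1' by (auto simp: A_def)
  \<comment> \<open>Transport \<open>f a\<close> back along \<open>H\<close>; its end \<open>b = t\<^sub>0\<^sup>* m\<^sub>0\<close> is the required lift of \<open>u\<close>.\<close>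
  have fa: "f (Cod C i) a \<in> PS Y (Cod C i)" using f a i by simp
  have "PM Y i (f (Cod C i) a) = PM Y (j \<cdot> P) H"
    using presheaf_mor_natural[OF f, of i a] a H i by (simp add: A_def)
  then obtain m\<^sub>0 where m\<^sub>0: "m\<^sub>0 \<in> PS Y (Cod C s\<^sub>0)" "PM Y (s\<^sub>0 \<cdot> l\<^sub>0) m\<^sub>0 = f (Cod C i) a"
    "PM Y (s\<^sub>0 \<cdot> k\<^sub>0) m\<^sub>0 = H" "PM Y i (PM Y t\<^sub>0 m\<^sub>0) = PM Y (j \<cdot> Q) H"
    using mapping_cylinder_homotopy_extension[OF Y M\<^sub>0 i fa, of H] H jPQ by auto
  have sk: "s\<^sub>0 \<cdot> k\<^sub>0 \<in> Mor C" "s\<^sub>0 \<cdot> l\<^sub>0 \<in> Mor C" "Dom C (s\<^sub>0 \<cdot> k\<^sub>0) = Cod C j"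
    "Dom C (s\<^sub>0 \<cdot> l\<^sub>0) = Cod C i" "Cod C (s\<^sub>0 \<cdot> k\<^sub>0) = Cod C s\<^sub>0" "Cod C (s\<^sub>0 \<cdot> l\<^sub>0) = Cod C s\<^sub>0"
    using M\<^sub>0' N\<^sub>0 jPQ by simp_all
  have "PM Z (s\<^sub>0 \<cdot> k\<^sub>0) (g (Cod C s\<^sub>0) m\<^sub>0) = PM Z (s\<^sub>1 \<cdot> k\<^sub>1) m\<^sub>1"
    using presheaf_mor_natural[OF g sk(1), of m\<^sub>0] m\<^sub>0 m\<^sub>1 sk by simp
  moreover have "PM Z (s\<^sub>0 \<cdot> l\<^sub>0) (g (Cod C s\<^sub>0) m\<^sub>0) = ps_comp g f (Cod C i) a"
    using presheaf_mor_natural[OF g sk(2), of m\<^sub>0] m\<^sub>0 sk by (simp add: ps_comp_def)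
  moreover have "g (Cod C s\<^sub>0) m\<^sub>0 \<in> PS Z (Cod C s\<^sub>0)" using g m\<^sub>0 M\<^sub>0' N\<^sub>0 by simp
  ultimately have "rel_homotopic Z i (PM Z t\<^sub>0 (g (Cod C s\<^sub>0) m\<^sub>0)) w"
    using rel_homotopic_through_mapping_cylinders[OF Z i M\<^sub>0 M\<^sub>1 _ m\<^sub>1(1)] ga m\<^sub>1(2) by simp
  moreover have "PM Z t\<^sub>0 (g (Cod C s\<^sub>0) m\<^sub>0) = g (Cod C i) (PM Y t\<^sub>0 m\<^sub>0)"
    using presheaf_mor_natural[OF g, of t\<^sub>0 m\<^sub>0] m\<^sub>0 M\<^sub>0' by simp
  moreover have "PM Y i (PM Y t\<^sub>0 m\<^sub>0) = u" "PM Y t\<^sub>0 m\<^sub>0 \<in> PS Y (Cod C i)"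
    using m\<^sub>0 H Y M\<^sub>0' by simp_all
  ultimately show "\<exists>b\<in>PS Y (Cod C i). PM Y i b = u \<and> rel_homotopic Z i (g (Cod C i) b) w"
    by auto
qed

end

theorem mainTheorem7:
  fixes C :: "('o, 'm) cyl_category"
    and X Y Z :: "('o, 'm, 'v) presheaf"
    and f g :: "'o \<Rightarrow> 'v \<Rightarrow> 'v"
  assumes "cylinder_category C"
    and "is_presheaf C X" and "is_presheaf C Y" and "is_presheaf C Z"
    and "presheaf_mor C X Y f" and "presheaf_mor C Y Z g"
  shows "(ps_weq C X Y f \<and> ps_weq C Y Z g \<longrightarrow> ps_weq C X Z (ps_comp g f)) \<and>
         (ps_weq C X Y f \<and> ps_weq C X Z (ps_comp g f) \<longrightarrow> ps_weq C Y Z g) \<and>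
         (ps_weq C Y Z g \<and> ps_weq C X Z (ps_comp g f) \<longrightarrow> ps_weq C X Y f)"
proof -
  interpret cylinder_cat C by (rule cylinder_cat.intro) (rule assms(1))
  show ?thesis
    using ps_weq_comp[OF assms(3-6)] ps_weq_cancel_right[OF assms(2-6)]
      ps_weq_cancel_left[OF assms(3-6)] by blast
qed

end
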